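(* Let $G=G_1\ast\cdots\ast G_n$ be a free product of finitely many nontrivial finite groups and let $L(G)$ be the complex defined in the context, with the action of $\Sigma Aut(G)=Aut(G)$. Then the stabilizer in $\Sigma Aut(G)$ of any simplex of $L(G)$ is finite.
   Context: Since the $G_i$ are finite, every automorphism of $G$ is symmetric, i.e. maps each $G_i$ to a conjugate of some $G_j$; $\Sigma Aut(G)=Aut(G)$. A basis of $G$ is a set $\mathcal{H}=\{H_1,\dots,H_n\}$ of subgroups with $H_i$ conjugate to $G_i$ and $G=H_1\ast\cdots\ast H_n$. A pointed labelled tree is a finite bipartite tree whose vertices are labelled (labels $\ast$ and the members of the basis, each once) or unlabelled, each edge joining a labelled and an unlabelled vertex, unlabelled vertices of valence at least 2, $\ast$ of valence 1. For a labelled vertex $k$, the petals at $k$ are the label sets of components of $T-\{k\}$, forming a partition $\underline{\underline{A}}(k)$; the tree is identified with the family $\underline{\underline{A}}$. $\underline{\underline{A}}\le\underline{\underline{B}}$ means every petal of each $\underline{\underline{A}}(k)$ is a union of petals of $\underline{\underline{B}}(k)$. For a basis $\mathcal{H}$, a factor index $k$ and $x_j\in H_k$ ($x_k=1$), the symmetric Whitehead automorphism $(\mathcal{H},x)$ acts on $H_j$ by $h\mapsto x_jhx_j^{-1}$ and trivially on $H_k$; it is carried by $(\mathcal{H},\underline{\underline{A}})$ if $x$ is constant on petals of $\underline{\underline{A}}(k)$ and trivial on the petal containing $\ast$. Pairs $(\mathcal{H},\underline{\underline{A}})$ and $(\rho(\mathcal{H}),\underline{\underline{A}})$ (labels transported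 along $\rho$), $\rho$ a product of symmetric Whitehead automorphisms carried by $(\mathcal{H},\underline{\underline{A}})$, are identified; classes $[\mathcal{H},\underline{\underline{A}}]$ are ordered by: $[\mathcal{H},\underline{\underline{A}}]\le[\mathcal{K},\underline{\underline{B}}]$ iff they have representatives with a common basis and trees $\underline{\underline{A}}\le\underline{\underline{B}}$. $L(G)$ is the realization of this poset, and $\phi\in Aut(G)$ acts by $\phi\cdot[\mathcal{H},\underline{\underline{A}}]=[\phi(\mathcal{H}),\phi(\underline{\underline{A}})]$, relabelling each vertex labelled $H$ by $\phi(H)$. *)

theory Defs
  imports "HOL-Algebra.Algebra"
begin

definition Aut :: "('a, 'b) monoid_scheme \<Rightarrow> ('a \<Rightarrow> 'a) set" where
  "Aut G = {\<phi>. \<phi> \<in> iso G G \<and> \<phi> \<in> extensional (carrier G)}"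

definition reduced_word ::
  "('a, 'b) monoid_scheme \<Rightarrow> ('i \<Rightarrow> 'a set) \<Rightarrow> 'i set \<Rightarrow> ('i \<times> 'a) list \<Rightarrow> bool" where
  "reduced_word G F I w \<longleftrightarrow>
     (\<forall>(i, g) \<in> set w. i \<in> I \<and> g \<in> F i \<and> g \<noteq> \<one>\<^bsub>G\<^esub>) \<and>
     (\<forall>j. Suc j < length w \<longrightarrow> fst (w ! j) \<noteq> fst (w ! Suc j))"

definition word_prod :: "('a, 'b) monoid_scheme \<Rightarrow> ('i \<times> 'a) list \<Rightarrow> 'a" where
  "word_prod G w = foldr (\<lambda>x y. x \<otimes>\<^bsub>G\<^esub> y) (map snd w) \<one>\<^bsub>G\<^esub>"

definition is_free_product :: "('a, 'b) monoid_scheme \<Rightarrow> ('i \<Rightarrow> 'a set) \<Rightarrow> 'i set \<Rightarrow> bool" where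
  "is_free_product G F I \<longleftrightarrow> group G \<and> (\<forall>i\<in>I. subgroup (F i) G) \<and>
     (\<forall>g \<in> carrier G. \<exists>!w. reduced_word G F I w \<and> word_prod G w = g)"

definition conj_set :: "('a, 'b) monoid_scheme \<Rightarrow> 'a \<Rightarrow> 'a set \<Rightarrow> 'a set" where
  "conj_set G g H = (\<lambda>h. g \<otimes>\<^bsub>G\<^esub> h \<otimes>\<^bsub>G\<^esub> inv\<^bsub>G\<^esub> g) ` H"

definition is_basis ::
  "('a, 'b) monoid_scheme \<Rightarrow> nat \<Rightarrow> (nat \<Rightarrow> 'a set) \<Rightarrow> 'a set set \<Rightarrow> bool" where
  "is_basis G n Gf \<H> \<longleftrightarrow> (\<exists>H. \<H> = H ` {..<n} \<and>
      (\<forall>i<n. \<exists>g\<in>carrier G. H i = conj_set G g (Gf i)) \<and> is_free_product G H {..<n})"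

datatype 'a lbl = Star | Fac "'a set"

text \<open>A finite graph on vertex set V (natural numbers), edge set E of 2-element sets,
  partial labelling lab (None = unlabelled).\<close>

definition adj_rel :: "nat set \<Rightarrow> nat set set \<Rightarrow> (nat \<times> nat) set" where
  "adj_rel W E = {(u, v). u \<in> W \<and> v \<in> W \<and> {u, v} \<in> E}"

definition valence :: "nat set set \<Rightarrow> nat \<Rightarrow> nat" where
  "valence E u = card {e \<in> E. u \<in> e}"

definition is_tree :: "nat set \<Rightarrow> nat set set \<Rightarrow> bool" where
  "is_tree V E \<longleftrightarrow> finite V \<and> V \<noteq> {} \<and>
     E \<subseteq> {{u, v} | u v. u \<in> V \<and> v \<in> V \<and> u \<noteq> v} \<and>
     (\<forall>u\<in>V. \<forall>v\<in>V. (u, v) \<in> (adj_rel V E)\<^sup>*) \<and>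
     card E + 1 = card V"

definition pointed_labelled_tree ::
  "'a lbl set \<Rightarrow> nat set \<Rightarrow> nat set set \<Rightarrow> (nat \<Rightarrow> 'a lbl option) \<Rightarrow> bool" where
  "pointed_labelled_tree Lb V E lab \<longleftrightarrow>
     is_tree V E \<and> Star \<in> Lb \<and>
     (\<forall>u\<in>V. \<forall>l. lab u = Some l \<longrightarrow> l \<in> Lb) \<and>
     (\<forall>l\<in>Lb. \<exists>!u. u \<in> V \<and> lab u = Some l) \<and>
     (\<forall>e\<in>E. \<exists>u v. e = {u, v} \<and> lab u \<noteq> None \<and> lab v = None) \<and>
     (\<forall>u\<in>V. lab u = None \<longrightarrow> valence E u \<ge> 2) \<and>
     (\<forall>u\<in>V. lab u = Some Star \<longrightarrow> valence E u = 1)"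

definition component_minus :: "nat set \<Rightarrow> nat set set \<Rightarrow> nat \<Rightarrow> nat \<Rightarrow> nat set" where
  "component_minus V E u v = {w. (v, w) \<in> (adj_rel (V - {u}) E)\<^sup>*}"

definition labels_of :: "(nat \<Rightarrow> 'a lbl option) \<Rightarrow> nat set \<Rightarrow> 'a lbl set" where
  "labels_of lab C = {l. \<exists>w\<in>C. lab w = Some l}"

text \<open>The family of petals: for each label k, the partition of the remaining labels
  given by the label sets of the components of T - {k}.\<close>
definition petal_family ::
  "nat set \<Rightarrow> nat set set \<Rightarrow> (nat \<Rightarrow> 'a lbl option) \<Rightarrow> 'a lbl \<Rightarrow> 'a lbl set set" where
  "petal_family V E lab k =
     {labels_of lab (component_minus V E u v) | u v. u \<in> V \<and> lab u = Some k \<and> v \<in> V - {u}}"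

definition tree_family :: "'a lbl set \<Rightarrow> ('a lbl \<Rightarrow> 'a lbl set set) \<Rightarrow> bool" where
  "tree_family Lb A \<longleftrightarrow>
     (\<exists>V E lab. pointed_labelled_tree Lb V E lab \<and> A = petal_family V E lab)"

definition tree_le :: "('a lbl \<Rightarrow> 'a lbl set set) \<Rightarrow> ('a lbl \<Rightarrow> 'a lbl set set) \<Rightarrow> bool" where
  "tree_le A B \<longleftrightarrow> (\<forall>k. \<forall>P\<in>A k. \<exists>S\<subseteq>B k. P = \<Union>S)"

definition basis_labels :: "'a set set \<Rightarrow> 'a lbl set" where
  "basis_labels \<H> = insert Star (Fac ` \<H>)"

fun map_lbl :: "('a \<Rightarrow> 'a) \<Rightarrow> 'a lbl \<Rightarrow> 'a lbl" where
  "map_lbl f Star = Star"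
| "map_lbl f (Fac H) = Fac (f ` H)"

definition relabel_fam ::
  "('a \<Rightarrow> 'a) \<Rightarrow> ('a lbl \<Rightarrow> 'a lbl set set) \<Rightarrow> 'a lbl \<Rightarrow> 'a lbl set set" where
  "relabel_fam f A l' = \<Union>{(\<lambda>P. map_lbl f ` P) ` A l | l. map_lbl f l = l'}"

definition whitehead_carried ::
  "('a, 'b) monoid_scheme \<Rightarrow> 'a set set \<Rightarrow> ('a lbl \<Rightarrow> 'a lbl set set) \<Rightarrow> ('a \<Rightarrow> 'a) \<Rightarrow> bool" where
  "whitehead_carried G \<H> A \<phi> \<longleftrightarrow>
     (\<exists>K\<in>\<H>. \<exists>x :: 'a set \<Rightarrow> 'a.
        x K = \<one>\<^bsub>G\<^esub> \<and> (\<forall>H\<in>\<H>. x H \<in> K) \<and>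
        (\<forall>P\<in>A (Fac K). \<forall>H1 H2. Fac H1 \<in> P \<longrightarrow> Fac H2 \<in> P \<longrightarrow> x H1 = x H2) \<and>
        (\<forall>P\<in>A (Fac K). Star \<in> P \<longrightarrow> (\<forall>H. Fac H \<in> P \<longrightarrow> x H = \<one>\<^bsub>G\<^esub>)) \<and>
        \<phi> \<in> Aut G \<and>
        (\<forall>H\<in>\<H>. \<forall>h\<in>H. \<phi> h = x H \<otimes>\<^bsub>G\<^esub> h \<otimes>\<^bsub>G\<^esub> inv\<^bsub>G\<^esub> (x H)))"

inductive_set whitehead_products ::
  "('a, 'b) monoid_scheme \<Rightarrow> 'a set set \<Rightarrow> ('a lbl \<Rightarrow> 'a lbl set set) \<Rightarrow> ('a \<Rightarrow> 'a) set"
  for G \<H> A where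
  wp_id: "(\<lambda>g\<in>carrier G. g) \<in> whitehead_products G \<H> A"
| wp_step: "whitehead_carried G \<H> A \<phi> \<Longrightarrow> \<rho> \<in> whitehead_products G \<H> A \<Longrightarrow>
            compose (carrier G) \<phi> \<rho> \<in> whitehead_products G \<H> A"

type_synonym 'a marked = "'a set set \<times> ('a lbl \<Rightarrow> 'a lbl set set)"

definition marked_tree ::
  "('a, 'b) monoid_scheme \<Rightarrow> nat \<Rightarrow> (nat \<Rightarrow> 'a set) \<Rightarrow> 'a marked \<Rightarrow> bool" where
  "marked_tree G n Gf p \<longleftrightarrow>
     is_basis G n Gf (fst p) \<and> tree_family (basis_labels (fst p)) (snd p)"

definition act_marked :: "('a \<Rightarrow> 'a) \<Rightarrow> 'a marked \<Rightarrow> 'a marked" where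
  "act_marked \<phi> p = ((`) \<phi> ` fst p, relabel_fam \<phi> (snd p))"

definition ident_step ::
  "('a, 'b) monoid_scheme \<Rightarrow> nat \<Rightarrow> (nat \<Rightarrow> 'a set) \<Rightarrow> ('a marked \<times> 'a marked) set" where
  "ident_step G n Gf = {(p, act_marked \<rho> p) | p \<rho>.
      marked_tree G n Gf p \<and> \<rho> \<in> whitehead_products G (fst p) (snd p)}"

definition ident ::
  "('a, 'b) monoid_scheme \<Rightarrow> nat \<Rightarrow> (nat \<Rightarrow> 'a set) \<Rightarrow> ('a marked \<times> 'a marked) set" where
  "ident G n Gf = (ident_step G n Gf \<union> (ident_step G n Gf)\<inverse>)\<^sup>*"

definition mclass ::
  "('a, 'b) monoid_scheme \<Rightarrow> nat \<Rightarrow> (nat \<Rightarrow> 'a set) \<Rightarrow> 'a marked \<Rightarrow> 'a marked set" where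
  "mclass G n Gf p = {q. (p, q) \<in> ident G n Gf}"

definition L_vertices ::
  "('a, 'b) monoid_scheme \<Rightarrow> nat \<Rightarrow> (nat \<Rightarrow> 'a set) \<Rightarrow> 'a marked set set" where
  "L_vertices G n Gf = {mclass G n Gf p | p. marked_tree G n Gf p}"

definition L_le :: "'a marked set \<Rightarrow> 'a marked set \<Rightarrow> bool" where
  "L_le c d \<longleftrightarrow> (\<exists>\<H> A B. (\<H>, A) \<in> c \<and> (\<H>, B) \<in> d \<and> tree_le A B)"

text \<open>Simplices of the realization of the poset: finite nonempty chains.\<close>
definition L_simplex ::
  "('a, 'b) monoid_scheme \<Rightarrow> nat \<Rightarrow> (nat \<Rightarrow> 'a set) \<Rightarrow> 'a marked set set \<Rightarrow> bool" where
  "L_simplex G n Gf \<sigma> \<longleftrightarrow> finite \<sigma> \<and> \<sigma> \<noteq> {} \<and> \<sigma> \<subseteq> L_vertices G n Gf \<and>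
     (\<forall>c\<in>\<sigma>. \<forall>d\<in>\<sigma>. L_le c d \<or> L_le d c)"

definition act_class ::
  "('a, 'b) monoid_scheme \<Rightarrow> nat \<Rightarrow> (nat \<Rightarrow> 'a set) \<Rightarrow> ('a \<Rightarrow> 'a) \<Rightarrow> 'a marked set \<Rightarrow> 'a marked set" where
  "act_class G n Gf \<phi> c = {q. \<exists>p\<in>c. (act_marked \<phi> p, q) \<in> ident G n Gf}"

definition simplex_stabilizer ::
  "('a, 'b) monoid_scheme \<Rightarrow> nat \<Rightarrow> (nat \<Rightarrow> 'a set) \<Rightarrow> 'a marked set set \<Rightarrow> ('a \<Rightarrow> 'a) set" where
  "simplex_stabilizer G n Gf \<sigma> = {\<phi> \<in> Aut G. act_class G n Gf \<phi> ` \<sigma> = \<sigma>}"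

end

theory Submission
  imports Defs
begin

text \<open>Let \<open>\<phi>\<close> stabilize the simplex and let \<open>p\<close> represent one of its vertices. Then
  \<open>\<phi> p\<close> is identified with the chosen representative \<open>q\<close> of some vertex of the simplex, and
  identified marked trees differ by a single product \<open>\<psi>\<close> of Whitehead automorphisms carried
  by \<open>q\<close>, so \<open>\<phi>\<close> maps every factor of \<open>p\<close> onto \<open>\<psi> H\<close> for a factor \<open>H\<close> of \<open>q\<close>.
  Along products of Whitehead automorphisms carried by a tree, every factor \<open>H\<close> is conjugated
  by a word \<open>k\<^sub>1 \<cdots> k\<^sub>m\<close> whose letters lie in the factors separating \<open>H\<close> from \<open>\<star>\<close>, listed
  from \<open>\<star>\<close> outwards. Hence all such images lie in one finite set, and since an automorphism of a
  free product is determined by its values on the factors, the stabilizer is finite.\<close>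

section \<open>Paths avoiding a vertex\<close>

lemma sym_adj_rel: "sym (adj_rel W E)"
  unfolding adj_rel_def sym_def by (auto simp: insert_commute)

lemma rtrancl_adj_rel_sym: "(a, b) \<in> (adj_rel W E)\<^sup>* \<Longrightarrow> (b, a) \<in> (adj_rel W E)\<^sup>*"
  using sym_adj_rel sym_rtrancl symD by metis

lemma rtrancl_adj_rel_mono:
  "W \<subseteq> W' \<Longrightarrow> (a, b) \<in> (adj_rel W E)\<^sup>* \<Longrightarrow> (a, b) \<in> (adj_rel W' E)\<^sup>*"
  using rtrancl_mono[of "adj_rel W E" "adj_rel W' E"] unfolding adj_rel_def by blast

lemma rtrancl_adj_rel_target: "(a, b) \<in> (adj_rel W E)\<^sup>* \<Longrightarrow> b = a \<or> b \<in> W"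
  by (induction rule: rtrancl_induct) (auto simp: adj_rel_def)

lemma adj_rel_restrict:
  "(y, k) \<in> adj_rel V E \<Longrightarrow> y \<in> W \<Longrightarrow> k \<in> W \<Longrightarrow> (y, k) \<in> adj_rel W E"
  by (simp add: adj_rel_def)

lemma rtrancl_adj_rel_first_hit:
  assumes "(a, b) \<in> (adj_rel W E)\<^sup>*" "a \<noteq> v"
  shows "(a, b) \<in> (adj_rel (W - {v}) E)\<^sup>* \<or>
    (\<exists>y. (a, y) \<in> (adj_rel (W - {v}) E)\<^sup>* \<and> (y, v) \<in> adj_rel W E)"
  using assms(1)
proof (induction rule: rtrancl_induct)
  case (step b c)
  show ?case
  proof (cases "(a, b) \<in> (adj_rel (W - {v}) E)\<^sup>* \<and> c \<noteq> v")
    case True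
    then have "b \<in> W - {v}"
      using rtrancl_adj_rel_target[of a b "W - {v}"] assms(2) step(2) by (auto simp: adj_rel_def)
    with True step(2) show ?thesis by (auto simp: adj_rel_def intro: rtrancl_into_rtrancl)
  qed (use step in blast)
qed simp

lemma rtrancl_adj_rel_last_step:
  assumes "(a, v) \<in> (adj_rel W E)\<^sup>*" "a \<noteq> v"
  obtains y where "(a, y) \<in> (adj_rel (W - {v}) E)\<^sup>*" "(y, v) \<in> adj_rel W E"
  using rtrancl_adj_rel_first_hit[OF assms] rtrancl_adj_rel_target[of a v "W - {v}" E] assms(2)
  by blast

lemma rtrancl_adj_rel_avoid_or_reach:
  assumes "(a, b) \<in> (adj_rel W E)\<^sup>*"
  shows "(a, b) \<in> (adj_rel (W - {v}) E)\<^sup>* \<or> (a, v) \<in> (adj_rel W E)\<^sup>*"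
proof (cases "a = v")
  case False
  from rtrancl_adj_rel_first_hit[OF assms False] show ?thesis
    using rtrancl_adj_rel_mono[of "W - {v}" W] by (blast intro: rtrancl_into_rtrancl)
qed simp

lemma rtrancl_adj_rel_reach_blocker:
  assumes "(a, b) \<in> (adj_rel (V - {k}) E)\<^sup>*" "(a, b) \<notin> (adj_rel (V - {l}) E)\<^sup>*"
  shows "(a, l) \<in> (adj_rel (V - {k}) E)\<^sup>*"
  using rtrancl_adj_rel_avoid_or_reach[OF assms(1), of l] assms(2)
    rtrancl_adj_rel_mono[of "V - {k} - {l}" "V - {l}" a b E] by blast

text \<open>In a connected graph, ``\<open>k\<close> lies on every path from \<open>s\<close> to \<open>t\<close>'' behaves like
  the ancestor order of a tree rooted at \<open>s\<close>, although the graph need not be a tree.\<close>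

lemma avoiding_paths_antisym:
  assumes "(s, k) \<in> (adj_rel V E)\<^sup>*" "s \<noteq> k" "s \<noteq> k'" "k \<noteq> k'"
  shows "(s, k') \<in> (adj_rel (V - {k}) E)\<^sup>* \<or> (s, k) \<in> (adj_rel (V - {k'}) E)\<^sup>*"
proof -
  obtain y where sy: "(s, y) \<in> (adj_rel (V - {k}) E)\<^sup>*" and yk: "(y, k) \<in> adj_rel V E"
    using rtrancl_adj_rel_last_step[OF assms(1,2)] .
  show ?thesis
  proof (cases "(s, y) \<in> (adj_rel (V - {k} - {k'}) E)\<^sup>*")
    case True
    then have "y \<in> V - {k'}"
      using rtrancl_adj_rel_target[OF True] yk assms(3) by (auto simp: adj_rel_def)
    moreover have "k \<in> V - {k'}" using yk assms(4) by (auto simp: adj_rel_def)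
    ultimately have "(y, k) \<in> adj_rel (V - {k'}) E" by (rule adj_rel_restrict[OF yk])
    with True show ?thesis
      using rtrancl_adj_rel_mono[of "V - {k} - {k'}" "V - {k'}"] by (blast intro: rtrancl_into_rtrancl)
  qed (use rtrancl_adj_rel_avoid_or_reach[OF sy, of k'] in blast)
qed

lemma avoiding_paths_total:
  assumes "(h, k) \<in> (adj_rel V E)\<^sup>*" "h \<noteq> k" "h \<noteq> k'" "k \<noteq> k'"
    and "(s, k') \<in> (adj_rel (V - {k}) E)\<^sup>*" "(s, k) \<in> (adj_rel (V - {k'}) E)\<^sup>*"
  shows "(s, h) \<in> (adj_rel (V - {k}) E)\<^sup>* \<or> (s, h) \<in> (adj_rel (V - {k'}) E)\<^sup>*"
proof -
  have "(h, k') \<in> (adj_rel (V - {k}) E)\<^sup>* \<or> (h, k) \<in> (adj_rel (V - {k'}) E)\<^sup>*"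
    using avoiding_paths_antisym[OF assms(1-4)] .
  then show ?thesis
    using assms(5,6) rtrancl_trans[OF _ rtrancl_adj_rel_sym] by blast
qed

lemma avoiding_paths_later_separator:
  assumes "(s, k) \<in> (adj_rel V E)\<^sup>*" "(h, k) \<in> (adj_rel V E)\<^sup>*"
    and "s \<noteq> k" "h \<noteq> k" "s \<noteq> l" "k \<noteq> l" "h \<noteq> l"
    and "(s, l) \<notin> (adj_rel (V - {k}) E)\<^sup>*" "(s, h) \<notin> (adj_rel (V - {l}) E)\<^sup>*"
  shows "(l, h) \<in> (adj_rel (V - {k}) E)\<^sup>*"
proof (rule ccontr)
  assume lh: "(l, h) \<notin> (adj_rel (V - {k}) E)\<^sup>*"
  \<comment> \<open>Then paths from \<open>s\<close> and from \<open>h\<close> to their first visit of \<open>k\<close> both avoid \<open>l\<close>,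
    and together they join \<open>s\<close> to \<open>h\<close> avoiding \<open>l\<close>.\<close>
  have avoid_l: "(a, y) \<in> (adj_rel (V - {l}) E)\<^sup>* \<and> (y, k) \<in> adj_rel (V - {l}) E"
    if "(a, y) \<in> (adj_rel (V - {k}) E)\<^sup>*" "(y, k) \<in> adj_rel V E" "a \<noteq> l"
      "(a, l) \<notin> (adj_rel (V - {k}) E)\<^sup>*" for a y
  proof -
    have ay: "(a, y) \<in> (adj_rel (V - {k} - {l}) E)\<^sup>*"
      using rtrancl_adj_rel_avoid_or_reach[OF that(1), of l] that(4) by blast
    have "y \<in> V - {l}" "k \<in> V - {l}"
      using rtrancl_adj_rel_target[OF ay] that(2,3) \<open>k \<noteq> l\<close> by (auto simp: adj_rel_def)
    then have "(y, k) \<in> adj_rel (V - {l}) E" by (rule adj_rel_restrict[OF that(2)])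
    moreover have "(a, y) \<in> (adj_rel (V - {l}) E)\<^sup>*"
      by (rule rtrancl_adj_rel_mono[OF _ ay]) blast
    ultimately show ?thesis by blast
  qed
  obtain y1 where "(s, y1) \<in> (adj_rel (V - {k}) E)\<^sup>*" "(y1, k) \<in> adj_rel V E"
    using rtrancl_adj_rel_last_step[OF assms(1,3)] .
  from avoid_l[OF this assms(5,8)]
  have sk: "(s, k) \<in> (adj_rel (V - {l}) E)\<^sup>*" by (blast intro: rtrancl_into_rtrancl)
  obtain y2 where "(h, y2) \<in> (adj_rel (V - {k}) E)\<^sup>*" "(y2, k) \<in> adj_rel V E"
    using rtrancl_adj_rel_last_step[OF assms(2,4)] .
  moreover have "(h, l) \<notin> (adj_rel (V - {k}) E)\<^sup>*" using lh rtrancl_adj_rel_sym by blast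
  ultimately have "(h, k) \<in> (adj_rel (V - {l}) E)\<^sup>*"
    using avoid_l assms(7) by (blast intro: rtrancl_into_rtrancl)
  then show False
    using assms(9) rtrancl_trans[OF sk rtrancl_adj_rel_sym] by blast
qed

lemma Aut_eq_auto: "Aut G = auto G"
  unfolding Aut_def auto_def iso_def Bij_def by auto

lemma carrier_AutoGroup: "carrier (AutoGroup G) = auto G"
  by (simp add: AutoGroup_def BijGroup_def)

lemma mult_AutoGroup:
  "f \<in> auto G \<Longrightarrow> g \<in> auto G \<Longrightarrow> f \<otimes>\<^bsub>AutoGroup G\<^esub> g = compose (carrier G) f g"
  by (simp add: AutoGroup_def BijGroup_def auto_def)

lemma one_AutoGroup: "\<one>\<^bsub>AutoGroup G\<^esub> = (\<lambda>x\<in>carrier G. x)"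
  by (simp add: AutoGroup_def BijGroup_def)

lemma mult_AutoGroup_apply:
  "f \<in> auto G \<Longrightarrow> g \<in> auto G \<Longrightarrow> x \<in> carrier G \<Longrightarrow> (f \<otimes>\<^bsub>AutoGroup G\<^esub> g) x = f (g x)"
  by (simp add: mult_AutoGroup compose_def)

lemma auto_extensional: "f \<in> auto G \<Longrightarrow> f \<in> extensional (carrier G)"
  by (simp add: auto_def Bij_def)

context group
begin

lemma auto_closed: "f \<in> auto G \<Longrightarrow> x \<in> carrier G \<Longrightarrow> f x \<in> carrier G"
  by (auto simp: auto_def hom_def)

lemma auto_group_hom: "f \<in> auto G \<Longrightarrow> group_hom G G f"
  by (simp add: group_hom_def group_hom_axioms_def is_group auto_def)

lemma auto_mult: "f \<in> auto G \<Longrightarrow> x \<in> carrier G \<Longrightarrow> y \<in> carrier G \<Longrightarrow> f (x \<otimes> y) = f x \<otimes> f y"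
  by (simp add: auto_def hom_mult)

lemma auto_inv: "f \<in> auto G \<Longrightarrow> x \<in> carrier G \<Longrightarrow> f (inv x) = inv (f x)"
  using group_hom.hom_inv[OF auto_group_hom] .

lemma auto_one: "f \<in> auto G \<Longrightarrow> f \<one> = \<one>"
  using group_hom.hom_one[OF auto_group_hom] .

lemma auto_conj:
  "f \<in> auto G \<Longrightarrow> a \<in> carrier G \<Longrightarrow> h \<in> carrier G \<Longrightarrow> f (a \<otimes> h \<otimes> inv a) = f a \<otimes> f h \<otimes> inv (f a)"
  by (simp add: auto_mult auto_inv)

lemma inv_mult_cancel_left: "x \<in> carrier G \<Longrightarrow> y \<in> carrier G \<Longrightarrow> inv x \<otimes> (x \<otimes> y) = y"
  by (simp flip: m_assoc)

lemma mult_inv_cancel_left: "x \<in> carrier G \<Longrightarrow> y \<in> carrier G \<Longrightarrow> x \<otimes> (inv x \<otimes> y) = y"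
  by (simp flip: m_assoc)

lemma inv_AutoGroup_auto: "f \<in> auto G \<Longrightarrow> inv\<^bsub>AutoGroup G\<^esub> f \<in> auto G"
  using group.inv_closed[OF AutoGroup] by (simp add: carrier_AutoGroup)

lemma inv_AutoGroup_apply:
  assumes "f \<in> auto G" "x \<in> carrier G"
  shows "(inv\<^bsub>AutoGroup G\<^esub> f) (f x) = x" and "f ((inv\<^bsub>AutoGroup G\<^esub> f) x) = x"
proof -
  interpret A: group "AutoGroup G" by (rule AutoGroup)
  have f: "f \<in> carrier (AutoGroup G)" and f': "inv\<^bsub>AutoGroup G\<^esub> f \<in> auto G"
    using assms(1) inv_AutoGroup_auto by (auto simp: carrier_AutoGroup)
  show "(inv\<^bsub>AutoGroup G\<^esub> f) (f x) = x"
    using A.l_inv[OF f] mult_AutoGroup_apply[OF f' assms] by (simp add: one_AutoGroup assms(2))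
  show "f ((inv\<^bsub>AutoGroup G\<^esub> f) x) = x"
    using A.r_inv[OF f] mult_AutoGroup_apply[OF assms(1) f' assms(2)] by (simp add: one_AutoGroup assms(2))
qed

end

definition list_prod :: "('a, 'b) monoid_scheme \<Rightarrow> 'a list \<Rightarrow> 'a" where
  "list_prod G ks = foldr (\<lambda>x y. x \<otimes>\<^bsub>G\<^esub> y) ks \<one>\<^bsub>G\<^esub>"

lemma word_prod_eq_list_prod: "word_prod G w = list_prod G (map snd w)"
  by (simp add: word_prod_def list_prod_def)

context group
begin

lemma list_prod_Nil [simp]: "list_prod G [] = \<one>"
  by (simp add: list_prod_def)

lemma list_prod_Cons [simp]: "list_prod G (x # xs) = x \<otimes> list_prod G xs"
  by (simp add: list_prod_def)

lemma list_prod_closed: "set ks \<subseteq> carrier G \<Longrightarrow> list_prod G ks \<in> carrier G"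
  by (induction ks) auto

lemma list_prod_append:
  "set xs \<subseteq> carrier G \<Longrightarrow> set ys \<subseteq> carrier G \<Longrightarrow> list_prod G (xs @ ys) = list_prod G xs \<otimes> list_prod G ys"
  by (induction xs) (auto simp: m_assoc list_prod_closed)

lemma auto_list_prod: "f \<in> auto G \<Longrightarrow> set ks \<subseteq> carrier G \<Longrightarrow> f (list_prod G ks) = list_prod G (map f ks)"
  by (induction ks) (auto simp: auto_one auto_mult list_prod_closed)

lemma list_prod_map_conj:
  "a \<in> carrier G \<Longrightarrow> set ks \<subseteq> carrier G \<Longrightarrow>
   list_prod G (map (\<lambda>y. a \<otimes> y \<otimes> inv a) ks) = a \<otimes> list_prod G ks \<otimes> inv a"
  by (induction ks) (auto simp: m_assoc list_prod_closed inv_mult_cancel_left)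

lemma list_prod_map_one: "list_prod G (map (\<lambda>_. \<one>) xs) = \<one>"
  by (induction xs) simp_all

lemma auto_list_prod_shift:
  assumes f: "f \<in> auto G"
    and c: "set ps \<subseteq> carrier G" "k \<in> carrier G" "set ss \<subseteq> carrier G" "a \<in> carrier G"
    and ps: "\<And>p. p \<in> set ps \<Longrightarrow> f p = p" and k: "f k = k"
    and ss: "\<And>s. s \<in> set ss \<Longrightarrow> f s = a \<otimes> s \<otimes> inv a"
  shows "f (list_prod G (ps @ k # ss)) = list_prod G (ps @ (k \<otimes> a) # ss) \<otimes> inv a"
proof -
  have "f (list_prod G (ps @ k # ss)) = list_prod G (map f (ps @ k # ss))"
    using c by (simp add: auto_list_prod[OF f])
  also have "map f (ps @ k # ss) = ps @ k # map (\<lambda>s. a \<otimes> s \<otimes> inv a) ss"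
    using ps k ss by (simp add: map_idI)
  also have "list_prod G \<dots> = list_prod G ps \<otimes> (k \<otimes> (a \<otimes> list_prod G ss \<otimes> inv a))"
  proof -
    have "set (k # map (\<lambda>s. a \<otimes> s \<otimes> inv a) ss) \<subseteq> carrier G" using c by auto
    then show ?thesis using c by (simp add: list_prod_append list_prod_map_conj)
  qed
  also have "\<dots> = list_prod G ps \<otimes> (k \<otimes> a \<otimes> list_prod G ss) \<otimes> inv a"
    using c by (simp add: m_assoc list_prod_closed)
  also have "\<dots> = list_prod G (ps @ (k \<otimes> a) # ss) \<otimes> inv a"
    using c by (simp add: list_prod_append)
  finally show ?thesis .
qed

lemma auto_conj_shift:
  assumes "f \<in> auto G" "w \<in> carrier G" "h \<in> carrier G" "w' \<in> carrier G" "a \<in> carrier G"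
    and "f w = w' \<otimes> inv a" "f h = a \<otimes> h \<otimes> inv a"
  shows "f (w \<otimes> h \<otimes> inv w) = w' \<otimes> h \<otimes> inv w'"
proof -
  have "f (w \<otimes> h \<otimes> inv w) = (w' \<otimes> inv a) \<otimes> (a \<otimes> h \<otimes> inv a) \<otimes> inv (w' \<otimes> inv a)"
    using assms by (simp add: auto_conj)
  also have "\<dots> = w' \<otimes> h \<otimes> inv w'"
    using assms(3-5) by (simp add: m_assoc inv_mult_group inv_mult_cancel_left)
  finally show ?thesis .
qed

end

lemma mem_relabel_fam:
  "Q \<in> relabel_fam f A l' \<longleftrightarrow> (\<exists>l P. map_lbl f l = l' \<and> P \<in> A l \<and> Q = map_lbl f ` P)"
  unfolding relabel_fam_def by blast

lemma relabel_fam_image: "P \<in> A l \<Longrightarrow> map_lbl f ` P \<in> relabel_fam f A (map_lbl f l)"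
  unfolding relabel_fam_def by blast

lemma relabel_fam_compose:
  assumes A: "\<And>l P. P \<in> A l \<Longrightarrow> l \<in> L \<and> P \<subseteq> L"
    and h: "\<And>l. l \<in> L \<Longrightarrow> map_lbl h l = map_lbl f (map_lbl g l)"
  shows "relabel_fam h A = relabel_fam f (relabel_fam g A)"
proof (intro ext Set.set_eqI)
  have image_h: "map_lbl h ` P = map_lbl f ` map_lbl g ` P" if "P \<in> A l" for l P
  proof -
    have "map_lbl h ` P = (map_lbl f \<circ> map_lbl g) ` P" using A[OF that] h by (intro image_cong) auto
    then show ?thesis by (simp add: image_comp)
  qed
  fix l' Q
  show "Q \<in> relabel_fam h A l' \<longleftrightarrow> Q \<in> relabel_fam f (relabel_fam g A) l'"
  proof
    assume "Q \<in> relabel_fam h A l'"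
    then obtain l P where "map_lbl h l = l'" "P \<in> A l" "Q = map_lbl h ` P"
      unfolding mem_relabel_fam by blast
    moreover have "map_lbl g ` P \<in> relabel_fam g A (map_lbl g l)"
      using \<open>P \<in> A l\<close> unfolding mem_relabel_fam by blast
    ultimately show "Q \<in> relabel_fam f (relabel_fam g A) l'"
      unfolding mem_relabel_fam[of Q] using h A image_h by metis
  next
    assume "Q \<in> relabel_fam f (relabel_fam g A) l'"
    then obtain l P where "map_lbl f (map_lbl g l) = l'" "P \<in> A l" "Q = map_lbl f ` map_lbl g ` P"
      unfolding mem_relabel_fam by blast
    then show "Q \<in> relabel_fam h A l'"
      unfolding mem_relabel_fam using h A image_h by metis
  qed
qed

lemma relabel_fam_ident:
  assumes A: "\<And>l P. P \<in> A l \<Longrightarrow> l \<in> L \<and> P \<subseteq> L" and h: "\<And>l. l \<in> L \<Longrightarrow> map_lbl h l = l"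
  shows "relabel_fam h A = A"
proof (intro ext Set.set_eqI)
  have image_h: "map_lbl h ` P = P" if "P \<in> A l" for l P
    using A[OF that] h by force
  fix l' Q
  show "Q \<in> relabel_fam h A l' \<longleftrightarrow> Q \<in> A l'"
    unfolding mem_relabel_fam using A h image_h by metis
qed

lemma image_compose: "H \<subseteq> C \<Longrightarrow> compose C f g ` H = f ` g ` H"
proof -
  assume "H \<subseteq> C"
  then have "compose C f g ` H = (f \<circ> g) ` H" by (intro image_cong) (auto simp: compose_def)
  then show ?thesis by (simp add: image_comp)
qed

lemma image_restrict_id: "H \<subseteq> C \<Longrightarrow> (\<lambda>x\<in>C. x) ` H = H"
  by (simp add: subset_eq)

lemma map_lbl_compose:
  assumes "l \<in> basis_labels \<H>" "\<forall>H\<in>\<H>. H \<subseteq> C"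
  shows "map_lbl (compose C f g) l = map_lbl f (map_lbl g l)"
proof (cases l)
  case (Fac H)
  with assms have "H \<subseteq> C" by (auto simp: basis_labels_def)
  with Fac show ?thesis by (simp only: map_lbl.simps image_compose)
qed simp

lemma map_lbl_restrict_id:
  assumes "l \<in> basis_labels \<H>" "\<forall>H\<in>\<H>. H \<subseteq> C"
  shows "map_lbl (\<lambda>x\<in>C. x) l = l"
proof (cases l)
  case (Fac H)
  with assms have "H \<subseteq> C" by (auto simp: basis_labels_def)
  with Fac show ?thesis by (simp only: map_lbl.simps image_restrict_id)
qed simp

section \<open>Symmetric Whitehead automorphisms\<close>

lemma whitehead_carriedI:
  assumes "K \<in> \<H>" "x K = \<one>\<^bsub>G\<^esub>" "\<And>H. H \<in> \<H> \<Longrightarrow> x H \<in> K"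
    and "\<And>P H1 H2. P \<in> A (Fac K) \<Longrightarrow> Fac H1 \<in> P \<Longrightarrow> Fac H2 \<in> P \<Longrightarrow> x H1 = x H2"
    and "\<And>P H. P \<in> A (Fac K) \<Longrightarrow> Star \<in> P \<Longrightarrow> Fac H \<in> P \<Longrightarrow> x H = \<one>\<^bsub>G\<^esub>"
    and "\<phi> \<in> auto G" "\<And>H h. H \<in> \<H> \<Longrightarrow> h \<in> H \<Longrightarrow> \<phi> h = x H \<otimes>\<^bsub>G\<^esub> h \<otimes>\<^bsub>G\<^esub> inv\<^bsub>G\<^esub> (x H)"
  shows "whitehead_carried G \<H> A \<phi>"
  unfolding whitehead_carried_def Aut_eq_auto
  by (intro bexI[OF _ assms(1)] exI[of _ x] conjI ballI allI impI) (fact | erule assms; assumption)+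

lemma whitehead_carriedE:
  assumes "whitehead_carried G \<H> A \<phi>"
  obtains K x where "K \<in> \<H>" "x K = \<one>\<^bsub>G\<^esub>" "\<And>H. H \<in> \<H> \<Longrightarrow> x H \<in> K"
    "\<And>P H1 H2. P \<in> A (Fac K) \<Longrightarrow> Fac H1 \<in> P \<Longrightarrow> Fac H2 \<in> P \<Longrightarrow> x H1 = x H2"
    "\<And>P H. P \<in> A (Fac K) \<Longrightarrow> Star \<in> P \<Longrightarrow> Fac H \<in> P \<Longrightarrow> x H = \<one>\<^bsub>G\<^esub>"
    "\<phi> \<in> auto G" "\<And>H h. H \<in> \<H> \<Longrightarrow> h \<in> H \<Longrightarrow> \<phi> h = x H \<otimes>\<^bsub>G\<^esub> h \<otimes>\<^bsub>G\<^esub> inv\<^bsub>G\<^esub> (x H)"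
proof -
  from assms obtain K x where K: "K \<in> \<H>" and x_K: "x K = \<one>\<^bsub>G\<^esub>" and x_in: "\<forall>H\<in>\<H>. x H \<in> K"
    and petal: "\<forall>P\<in>A (Fac K). \<forall>H1 H2. Fac H1 \<in> P \<longrightarrow> Fac H2 \<in> P \<longrightarrow> x H1 = x H2"
    and star: "\<forall>P\<in>A (Fac K). Star \<in> P \<longrightarrow> (\<forall>H. Fac H \<in> P \<longrightarrow> x H = \<one>\<^bsub>G\<^esub>)"
    and \<phi>: "\<phi> \<in> auto G" and conj: "\<forall>H\<in>\<H>. \<forall>h\<in>H. \<phi> h = x H \<otimes>\<^bsub>G\<^esub> h \<otimes>\<^bsub>G\<^esub> inv\<^bsub>G\<^esub> (x H)"
    unfolding whitehead_carried_def Aut_eq_auto by (elim bexE exE conjE) (rule that, assumption+)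
  show thesis
    by (rule that[of K x, OF K x_K x_in[rule_format] petal[rule_format] star[rule_format] \<phi> conj[rule_format]])
qed

lemma whitehead_carried_auto: "whitehead_carried G \<H> A \<phi> \<Longrightarrow> \<phi> \<in> auto G"
  by (erule whitehead_carriedE)

context group
begin

lemma whitehead_carried_inv:
  assumes "whitehead_carried G \<H> A \<phi>" and sg: "\<forall>H\<in>\<H>. subgroup H G"
  shows "whitehead_carried G \<H> A (inv\<^bsub>AutoGroup G\<^esub> \<phi>)"
proof -
  obtain K x where K: "K \<in> \<H>" and x_K: "x K = \<one>" and x_in: "\<And>H. H \<in> \<H> \<Longrightarrow> x H \<in> K"
    and petal: "\<And>P H1 H2. P \<in> A (Fac K) \<Longrightarrow> Fac H1 \<in> P \<Longrightarrow> Fac H2 \<in> P \<Longrightarrow> x H1 = x H2"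
    and star: "\<And>P H. P \<in> A (Fac K) \<Longrightarrow> Star \<in> P \<Longrightarrow> Fac H \<in> P \<Longrightarrow> x H = \<one>"
    and \<phi>: "\<phi> \<in> auto G" and \<phi>_conj: "\<And>H h. H \<in> \<H> \<Longrightarrow> h \<in> H \<Longrightarrow> \<phi> h = x H \<otimes> h \<otimes> inv (x H)"
    by (erule whitehead_carriedE[OF assms(1)])
  have sg_K: "subgroup K G" using sg K by blast
  show ?thesis
  proof (rule whitehead_carriedI[where x = "\<lambda>H. inv (x H)", OF K])
    show "inv (x H) \<in> K" if "H \<in> \<H>" for H
      using subgroup.m_inv_closed[OF sg_K x_in[OF that]] .
    show "inv\<^bsub>AutoGroup G\<^esub> \<phi> \<in> auto G" using inv_AutoGroup_auto[OF \<phi>] .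
    fix H h assume H: "H \<in> \<H>" and h: "h \<in> H"
    have xc: "x H \<in> carrier G" using subgroup.mem_carrier[OF sg_K x_in[OF H]] .
    have hc: "h \<in> carrier G" using subgroup.mem_carrier[OF sg[rule_format, OF H] h] .
    \<comment> \<open>\<open>\<phi>\<close> fixes \<open>K\<close> pointwise, in particular it fixes \<open>x H\<close>.\<close>
    have "\<phi> (x H) = x H" using \<phi>_conj[OF K x_in[OF H]] x_K xc by simp
    then have "\<phi> (inv (x H) \<otimes> h \<otimes> x H) = h"
      using \<phi>_conj[OF H h] xc hc by (simp add: auto_mult auto_inv \<phi> m_assoc inv_mult_cancel_left)
    then show "(inv\<^bsub>AutoGroup G\<^esub> \<phi>) h = inv (x H) \<otimes> h \<otimes> inv (inv (x H))"
      using inv_AutoGroup_apply(1)[OF \<phi>, of "inv (x H) \<otimes> h \<otimes> x H"] xc hc by simp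
  next
    show "inv (x H1) = inv (x H2)" if "P \<in> A (Fac K)" "Fac H1 \<in> P" "Fac H2 \<in> P" for P H1 H2
      using petal[OF that] by (rule arg_cong)
  next
    show "inv (x H) = \<one>" if "P \<in> A (Fac K)" "Star \<in> P" "Fac H \<in> P" for P H
      using star[OF that] by simp
  qed (use x_K in simp)
qed

lemma conj_AutoGroup:
  assumes "\<theta> \<in> auto G" "\<phi> \<in> auto G"
  shows "inv\<^bsub>AutoGroup G\<^esub> \<theta> \<otimes>\<^bsub>AutoGroup G\<^esub> \<phi> \<otimes>\<^bsub>AutoGroup G\<^esub> \<theta> \<in> auto G"
    and "h \<in> carrier G \<Longrightarrow>
      (inv\<^bsub>AutoGroup G\<^esub> \<theta> \<otimes>\<^bsub>AutoGroup G\<^esub> \<phi> \<otimes>\<^bsub>AutoGroup G\<^esub> \<theta>) h = (inv\<^bsub>AutoGroup G\<^esub> \<theta>) (\<phi> (\<theta> h))"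
proof -
  interpret A: group "AutoGroup G" by (rule AutoGroup)
  have c: "inv\<^bsub>AutoGroup G\<^esub> \<theta> \<in> auto G" "inv\<^bsub>AutoGroup G\<^esub> \<theta> \<otimes>\<^bsub>AutoGroup G\<^esub> \<phi> \<in> auto G"
    using assms A.inv_closed A.m_closed unfolding carrier_AutoGroup by blast+
  then show "inv\<^bsub>AutoGroup G\<^esub> \<theta> \<otimes>\<^bsub>AutoGroup G\<^esub> \<phi> \<otimes>\<^bsub>AutoGroup G\<^esub> \<theta> \<in> auto G"
    using assms A.m_closed unfolding carrier_AutoGroup by blast
  show "(inv\<^bsub>AutoGroup G\<^esub> \<theta> \<otimes>\<^bsub>AutoGroup G\<^esub> \<phi> \<otimes>\<^bsub>AutoGroup G\<^esub> \<theta>) h = (inv\<^bsub>AutoGroup G\<^esub> \<theta>) (\<phi> (\<theta> h))"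
    if "h \<in> carrier G" using that assms c auto_closed by (simp add: mult_AutoGroup_apply)
qed

lemma whitehead_carried_conj:
  assumes \<theta>: "\<theta> \<in> auto G" and sub: "\<forall>H\<in>\<H>. H \<subseteq> carrier G"
    and "whitehead_carried G ((`) \<theta> ` \<H>) (relabel_fam \<theta> A) \<phi>"
  shows "whitehead_carried G \<H> A (inv\<^bsub>AutoGroup G\<^esub> \<theta> \<otimes>\<^bsub>AutoGroup G\<^esub> \<phi> \<otimes>\<^bsub>AutoGroup G\<^esub> \<theta>)"
proof -
  let ?\<theta>' = "inv\<^bsub>AutoGroup G\<^esub> \<theta>"
  obtain K' x' where K': "K' \<in> (`) \<theta> ` \<H>" and x'_K: "x' K' = \<one>"
    and x'_in: "\<And>H. H \<in> (`) \<theta> ` \<H> \<Longrightarrow> x' H \<in> K'"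
    and petal: "\<And>P H1 H2. P \<in> relabel_fam \<theta> A (Fac K') \<Longrightarrow> Fac H1 \<in> P \<Longrightarrow> Fac H2 \<in> P \<Longrightarrow> x' H1 = x' H2"
    and star: "\<And>P H. P \<in> relabel_fam \<theta> A (Fac K') \<Longrightarrow> Star \<in> P \<Longrightarrow> Fac H \<in> P \<Longrightarrow> x' H = \<one>"
    and \<phi>: "\<phi> \<in> auto G"
    and \<phi>_conj: "\<And>H h. H \<in> (`) \<theta> ` \<H> \<Longrightarrow> h \<in> H \<Longrightarrow> \<phi> h = x' H \<otimes> h \<otimes> inv (x' H)"
    by (erule whitehead_carriedE[OF assms(3)])
  from K' obtain K where K: "K \<in> \<H>" and K'_eq: "K' = \<theta> ` K" by blast
  have petal': "map_lbl \<theta> ` P \<in> relabel_fam \<theta> A (Fac K')" if "P \<in> A (Fac K)" for P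
    using relabel_fam_image[of P A "Fac K" \<theta>] that K'_eq by simp
  have Fac_image: "Fac (\<theta> ` H) \<in> map_lbl \<theta> ` P" if "Fac H \<in> P" for H P
    using imageI[OF that, of "map_lbl \<theta>"] by simp
  define x where "x H = ?\<theta>' (x' (\<theta> ` H))" for H
  have x'_eq: "x' (\<theta> ` H) = \<theta> (x H) \<and> x H \<in> K" if H: "H \<in> \<H>" for H
  proof -
    have "x' (\<theta> ` H) \<in> \<theta> ` K" using x'_in[OF imageI[OF H]] K'_eq by simp
    then obtain k where k: "k \<in> K" "x' (\<theta> ` H) = \<theta> k" by blast
    have "k \<in> carrier G" using k(1) K sub by blast
    then have "x H = k" using k(2) inv_AutoGroup_apply(1)[OF \<theta>] by (simp add: x_def)
    then show ?thesis using k by simp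
  qed
  show ?thesis
  proof (rule whitehead_carriedI[where x = x, OF K _ _ _ _ conj_AutoGroup(1)[OF \<theta> \<phi>]])
    show "x K = \<one>" using x'_K K'_eq auto_one[OF inv_AutoGroup_auto[OF \<theta>]] by (simp add: x_def)
    show "x H \<in> K" if "H \<in> \<H>" for H using x'_eq[OF that] by blast
    show "x H1 = x H2" if "P \<in> A (Fac K)" "Fac H1 \<in> P" "Fac H2 \<in> P" for P H1 H2
      using petal[OF petal'[OF that(1)] Fac_image[OF that(2)] Fac_image[OF that(3)]]
      by (simp add: x_def)
    show "x H = \<one>" if "P \<in> A (Fac K)" "Star \<in> P" "Fac H \<in> P" for P H
      using star[OF petal'[OF that(1)] imageI[OF that(2), of "map_lbl \<theta>", simplified] Fac_image[OF that(3)]]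
        auto_one[OF inv_AutoGroup_auto[OF \<theta>]]
      by (simp add: x_def)
    fix H h assume H: "H \<in> \<H>" and h: "h \<in> H"
    have hc: "h \<in> carrier G" using sub H h by blast
    have xc: "x H \<in> carrier G" using x'_eq[OF H] K sub by blast
    have "\<phi> (\<theta> h) = \<theta> (x H \<otimes> h \<otimes> inv (x H))"
      using \<phi>_conj[of "\<theta> ` H" "\<theta> h"] H h x'_eq[OF H] xc hc by (simp add: auto_conj \<theta>)
    then show "(?\<theta>' \<otimes>\<^bsub>AutoGroup G\<^esub> \<phi> \<otimes>\<^bsub>AutoGroup G\<^esub> \<theta>) h = x H \<otimes> h \<otimes> inv (x H)"
      using conj_AutoGroup(2)[OF \<theta> \<phi> hc] inv_AutoGroup_apply(1)[OF \<theta>] xc hc by simp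
  qed
qed

lemma whitehead_products_auto: "\<rho> \<in> whitehead_products G \<H> A \<Longrightarrow> \<rho> \<in> auto G"
proof (induction rule: whitehead_products.induct)
  case wp_id
  show ?case by (rule id_in_auto)
next
  case (wp_step \<phi> \<rho>)
  interpret A: group "AutoGroup G" by (rule AutoGroup)
  from wp_step have "\<phi> \<in> auto G" by (blast intro: whitehead_carried_auto)
  with wp_step.IH show ?case
    using A.m_closed[of \<phi> \<rho>] by (simp add: carrier_AutoGroup mult_AutoGroup)
qed

lemma whitehead_products_one: "\<one>\<^bsub>AutoGroup G\<^esub> \<in> whitehead_products G \<H> A"
  unfolding one_AutoGroup by (rule whitehead_products.wp_id)

lemma whitehead_products_step:
  assumes "whitehead_carried G \<H> A \<phi>" "\<rho> \<in> whitehead_products G \<H> A"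
  shows "\<phi> \<otimes>\<^bsub>AutoGroup G\<^esub> \<rho> \<in> whitehead_products G \<H> A"
  using whitehead_products.wp_step[OF assms]
  by (simp add: mult_AutoGroup whitehead_carried_auto[OF assms(1)] whitehead_products_auto[OF assms(2)])

lemma whitehead_products_mult:
  assumes "\<rho>1 \<in> whitehead_products G \<H> A" "\<rho>2 \<in> whitehead_products G \<H> A"
  shows "\<rho>1 \<otimes>\<^bsub>AutoGroup G\<^esub> \<rho>2 \<in> whitehead_products G \<H> A"
  using assms
proof (induction rule: whitehead_products.induct)
  interpret A: group "AutoGroup G" by (rule AutoGroup)
  case wp_id
  have "\<rho>2 \<in> carrier (AutoGroup G)"
    using whitehead_products_auto[OF wp_id] unfolding carrier_AutoGroup .
  with wp_id show ?case unfolding one_AutoGroup[symmetric] by simp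
next
  interpret A: group "AutoGroup G" by (rule AutoGroup)
  case (wp_step \<phi> \<rho>)
  have c: "\<phi> \<in> carrier (AutoGroup G)" "\<rho> \<in> carrier (AutoGroup G)" "\<rho>2 \<in> carrier (AutoGroup G)"
    using wp_step whitehead_carried_auto whitehead_products_auto unfolding carrier_AutoGroup by blast+
  then have "compose (carrier G) \<phi> \<rho> \<otimes>\<^bsub>AutoGroup G\<^esub> \<rho>2 = \<phi> \<otimes>\<^bsub>AutoGroup G\<^esub> (\<rho> \<otimes>\<^bsub>AutoGroup G\<^esub> \<rho>2)"
    using A.m_assoc by (simp add: carrier_AutoGroup mult_AutoGroup)
  then show ?case using whitehead_products_step[OF wp_step(1) wp_step.IH[OF wp_step(4)]] by simp
qed

lemma whitehead_products_inv:
  assumes "\<rho> \<in> whitehead_products G \<H> A" and sg: "\<forall>H\<in>\<H>. subgroup H G"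
  shows "inv\<^bsub>AutoGroup G\<^esub> \<rho> \<in> whitehead_products G \<H> A"
  using assms(1)
proof (induction rule: whitehead_products.induct)
  interpret A: group "AutoGroup G" by (rule AutoGroup)
  case wp_id
  show ?case using whitehead_products_one unfolding one_AutoGroup[symmetric] by simp
next
  interpret A: group "AutoGroup G" by (rule AutoGroup)
  case (wp_step \<phi> \<rho>)
  have c: "\<phi> \<in> carrier (AutoGroup G)" "\<rho> \<in> carrier (AutoGroup G)"
    using wp_step whitehead_carried_auto whitehead_products_auto unfolding carrier_AutoGroup by blast+
  have "inv\<^bsub>AutoGroup G\<^esub> \<phi> \<in> whitehead_products G \<H> A"
    using whitehead_products_step[OF whitehead_carried_inv[OF wp_step(1) sg] whitehead_products_one]
      c(1) by simp
  then have "inv\<^bsub>AutoGroup G\<^esub> \<rho> \<otimes>\<^bsub>AutoGroup G\<^esub> inv\<^bsub>AutoGroup G\<^esub> \<phi> \<in> whitehead_products G \<H> A"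
    using wp_step.IH whitehead_products_mult by blast
  moreover have "compose (carrier G) \<phi> \<rho> = \<phi> \<otimes>\<^bsub>AutoGroup G\<^esub> \<rho>"
    using c by (simp add: carrier_AutoGroup mult_AutoGroup)
  ultimately show ?case using A.inv_mult_group c by simp
qed

lemma subgroup_whitehead_products:
  assumes "\<forall>H\<in>\<H>. subgroup H G"
  shows "subgroup (whitehead_products G \<H> A) (AutoGroup G)"
proof (rule group.subgroupI[OF AutoGroup])
  show "whitehead_products G \<H> A \<subseteq> carrier (AutoGroup G)"
    using whitehead_products_auto unfolding carrier_AutoGroup by blast
  show "whitehead_products G \<H> A \<noteq> {}" using whitehead_products_one by blast
qed (use whitehead_products_mult whitehead_products_inv[OF _ assms] in blast)+

lemma whitehead_products_conj:
  assumes \<theta>: "\<theta> \<in> auto G" and sub: "\<forall>H\<in>\<H>. H \<subseteq> carrier G"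
    and "\<rho> \<in> whitehead_products G ((`) \<theta> ` \<H>) (relabel_fam \<theta> A)"
  shows "inv\<^bsub>AutoGroup G\<^esub> \<theta> \<otimes>\<^bsub>AutoGroup G\<^esub> \<rho> \<otimes>\<^bsub>AutoGroup G\<^esub> \<theta> \<in> whitehead_products G \<H> A"
  using assms(3)
proof (induction rule: whitehead_products.induct)
  interpret A: group "AutoGroup G" by (rule AutoGroup)
  have \<theta>': "\<theta> \<in> carrier (AutoGroup G)" using \<theta> by (simp add: carrier_AutoGroup)
  case wp_id
  show ?case using whitehead_products_one \<theta>' unfolding one_AutoGroup[symmetric] by simp
next
  interpret A: group "AutoGroup G" by (rule AutoGroup)
  case (wp_step \<phi> \<rho>)
  have c: "\<theta> \<in> carrier (AutoGroup G)" "\<phi> \<in> carrier (AutoGroup G)" "\<rho> \<in> carrier (AutoGroup G)"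
    using \<theta> wp_step whitehead_carried_auto whitehead_products_auto unfolding carrier_AutoGroup by blast+
  have "inv\<^bsub>AutoGroup G\<^esub> \<theta> \<otimes>\<^bsub>AutoGroup G\<^esub> (\<phi> \<otimes>\<^bsub>AutoGroup G\<^esub> \<rho>) \<otimes>\<^bsub>AutoGroup G\<^esub> \<theta> =
      (inv\<^bsub>AutoGroup G\<^esub> \<theta> \<otimes>\<^bsub>AutoGroup G\<^esub> \<phi> \<otimes>\<^bsub>AutoGroup G\<^esub> \<theta>) \<otimes>\<^bsub>AutoGroup G\<^esub>
      (inv\<^bsub>AutoGroup G\<^esub> \<theta> \<otimes>\<^bsub>AutoGroup G\<^esub> \<rho> \<otimes>\<^bsub>AutoGroup G\<^esub> \<theta>)"
    using c by (simp add: A.m_assoc A.mult_inv_cancel_left)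
  moreover have "compose (carrier G) \<phi> \<rho> = \<phi> \<otimes>\<^bsub>AutoGroup G\<^esub> \<rho>"
    using c by (simp add: carrier_AutoGroup mult_AutoGroup)
  ultimately show ?case
    using whitehead_products_step[OF whitehead_carried_conj[OF \<theta> sub wp_step(1)] wp_step.IH] by simp
qed

end

definition well_labelled :: "('a, 'b) monoid_scheme \<Rightarrow> 'a marked \<Rightarrow> bool" where
  "well_labelled G p \<longleftrightarrow> (\<forall>H\<in>fst p. H \<subseteq> carrier G) \<and>
     (\<forall>l P. P \<in> snd p l \<longrightarrow> l \<in> basis_labels (fst p) \<and> P \<subseteq> basis_labels (fst p))"

lemma act_marked_compose:
  assumes "well_labelled G p"
  shows "act_marked (compose (carrier G) f g) p = act_marked f (act_marked g p)"
proof -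
  have sub: "\<forall>H\<in>fst p. H \<subseteq> carrier G"
    and labels: "\<And>l P. P \<in> snd p l \<Longrightarrow> l \<in> basis_labels (fst p) \<and> P \<subseteq> basis_labels (fst p)"
    using assms unfolding well_labelled_def by blast+
  have "(`) (compose (carrier G) f g) ` fst p = ((`) f \<circ> (`) g) ` fst p"
    by (intro image_cong) (simp_all add: sub image_compose del: image_image)
  moreover have "relabel_fam (compose (carrier G) f g) (snd p) = relabel_fam f (relabel_fam g (snd p))"
    using labels map_lbl_compose[OF _ sub] by (rule relabel_fam_compose)
  ultimately show ?thesis by (simp add: act_marked_def image_comp)
qed

lemma act_marked_restrict_id:
  assumes "well_labelled G p"
  shows "act_marked (\<lambda>x\<in>carrier G. x) p = p"
proof -
  have sub: "\<forall>H\<in>fst p. H \<subseteq> carrier G"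
    and labels: "\<And>l P. P \<in> snd p l \<Longrightarrow> l \<in> basis_labels (fst p) \<and> P \<subseteq> basis_labels (fst p)"
    using assms unfolding well_labelled_def by blast+
  have "(`) (\<lambda>x\<in>carrier G. x) ` fst p = id ` fst p"
  proof (rule image_cong)
    fix H assume "H \<in> fst p"
    with sub show "(\<lambda>x\<in>carrier G. x) ` H = id H" unfolding id_apply by (intro image_restrict_id) blast
  qed (rule refl)
  moreover have "relabel_fam (\<lambda>x\<in>carrier G. x) (snd p) = snd p"
    using labels map_lbl_restrict_id[OF _ sub] by (rule relabel_fam_ident)
  ultimately show ?thesis by (simp add: act_marked_def)
qed

lemma is_basisE:
  assumes "is_basis G n Gf \<H>"
  obtains Hf where "\<H> = Hf ` {..<n}" "\<forall>i<n. \<exists>g\<in>carrier G. Hf i = conj_set G g (Gf i)"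
    "is_free_product G Hf {..<n}"
  using assms unfolding is_basis_def by blast

lemma is_basis_subgroups: "is_basis G n Gf \<H> \<Longrightarrow> \<forall>H\<in>\<H>. subgroup H G"
  by (elim is_basisE) (auto simp: is_free_product_def)

lemma is_basis_finite:
  assumes "is_basis G n Gf \<H>" "\<forall>i<n. finite (Gf i)"
  shows "finite \<H>" and "\<forall>H\<in>\<H>. finite H"
proof -
  obtain Hf where \<H>: "\<H> = Hf ` {..<n}" and conj: "\<forall>i<n. \<exists>g\<in>carrier G. Hf i = conj_set G g (Gf i)"
    and "is_free_product G Hf {..<n}"
    using assms(1) by (rule is_basisE)
  show "finite \<H>" unfolding \<H> by simp
  show "\<forall>H\<in>\<H>. finite H"
    unfolding \<H> using conj assms(2) by (auto simp: conj_set_def)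
qed

lemma marked_treeE:
  assumes "marked_tree G n Gf p"
  obtains V E lab where "pointed_labelled_tree (basis_labels (fst p)) V E lab"
    "snd p = petal_family V E lab"
  using assms unfolding marked_tree_def tree_family_def by (elim conjE exE) (rule that)

lemma marked_tree_subgroups: "marked_tree G n Gf p \<Longrightarrow> \<forall>H\<in>fst p. subgroup H G"
  unfolding marked_tree_def by (elim conjE is_basis_subgroups)

lemma marked_tree_well_labelled:
  assumes "marked_tree G n Gf p"
  shows "well_labelled G p"
proof -
  obtain V E lab where T: "pointed_labelled_tree (basis_labels (fst p)) V E lab"
    and A: "snd p = petal_family V E lab"
    using assms by (rule marked_treeE)
  have "\<forall>u\<in>V. \<forall>l. lab u = Some l \<longrightarrow> l \<in> basis_labels (fst p)"
    using T unfolding pointed_labelled_tree_def by (elim conjE)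
  then have lab: "l \<in> basis_labels (fst p)" if "u \<in> V" "lab u = Some l" for u l
    using that by blast
  have "l \<in> basis_labels (fst p) \<and> P \<subseteq> basis_labels (fst p)" if P: "P \<in> snd p l" for l P
  proof -
    obtain u v where P: "P = labels_of lab (component_minus V E u v)" and u: "u \<in> V" "lab u = Some l"
      and v: "v \<in> V - {u}"
      using P unfolding A petal_family_def by blast
    have "component_minus V E u v \<subseteq> V"
      using rtrancl_adj_rel_target v unfolding component_minus_def by blast
    then show ?thesis using lab u unfolding P labels_of_def by blast
  qed
  moreover have "\<forall>H\<in>fst p. H \<subseteq> carrier G"
    using subgroup.subset[OF bspec[OF marked_tree_subgroups[OF assms]]] by blast
  ultimately show ?thesis unfolding well_labelled_def by blast
qed

context group
begin

lemma act_marked_mult: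
  "well_labelled G p \<Longrightarrow> f \<in> auto G \<Longrightarrow> g \<in> auto G \<Longrightarrow>
   act_marked (f \<otimes>\<^bsub>AutoGroup G\<^esub> g) p = act_marked f (act_marked g p)"
  by (simp add: mult_AutoGroup act_marked_compose)

lemma act_marked_one: "well_labelled G p \<Longrightarrow> act_marked \<one>\<^bsub>AutoGroup G\<^esub> p = p"
  by (simp add: one_AutoGroup act_marked_restrict_id)

lemma whitehead_products_act_marked:
  assumes "well_labelled G q" "\<theta> \<in> auto G"
    and "\<sigma> \<in> whitehead_products G (fst (act_marked \<theta> q)) (snd (act_marked \<theta> q))"
  shows "inv\<^bsub>AutoGroup G\<^esub> \<theta> \<otimes>\<^bsub>AutoGroup G\<^esub> \<sigma> \<otimes>\<^bsub>AutoGroup G\<^esub> \<theta> \<in> whitehead_products G (fst q) (snd q)"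
  using assms whitehead_products_conj[OF assms(2)]
  unfolding well_labelled_def act_marked_def by simp

lemma whitehead_orbit_step:
  assumes q: "well_labelled G q" "\<forall>H\<in>fst q. subgroup H G"
    and \<psi>: "\<psi> \<in> whitehead_products G (fst q) (snd q)"
    and \<rho>: "\<rho> \<in> whitehead_products G (fst (act_marked \<psi> q)) (snd (act_marked \<psi> q))"
  shows "\<rho> \<otimes>\<^bsub>AutoGroup G\<^esub> \<psi> \<in> whitehead_products G (fst q) (snd q)"
    and "act_marked \<rho> (act_marked \<psi> q) = act_marked (\<rho> \<otimes>\<^bsub>AutoGroup G\<^esub> \<psi>) q"
proof -
  interpret A: group "AutoGroup G" by (rule AutoGroup)
  have \<psi>_auto: "\<psi> \<in> auto G" and \<rho>_auto: "\<rho> \<in> auto G"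
    using \<psi> \<rho> whitehead_products_auto by blast+
  have "\<psi> \<otimes>\<^bsub>AutoGroup G\<^esub> (inv\<^bsub>AutoGroup G\<^esub> \<psi> \<otimes>\<^bsub>AutoGroup G\<^esub> \<rho> \<otimes>\<^bsub>AutoGroup G\<^esub> \<psi>)
      \<in> whitehead_products G (fst q) (snd q)"
    using whitehead_products_act_marked[OF q(1) \<psi>_auto \<rho>] \<psi>
      subgroup.m_closed[OF subgroup_whitehead_products[OF q(2)]] by blast
  then show "\<rho> \<otimes>\<^bsub>AutoGroup G\<^esub> \<psi> \<in> whitehead_products G (fst q) (snd q)"
    using \<psi>_auto \<rho>_auto by (simp add: carrier_AutoGroup[symmetric] A.m_assoc A.mult_inv_cancel_left)
  show "act_marked \<rho> (act_marked \<psi> q) = act_marked (\<rho> \<otimes>\<^bsub>AutoGroup G\<^esub> \<psi>) q"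
    using act_marked_mult[OF q(1) \<rho>_auto \<psi>_auto] ..
qed

text \<open>Going back along an identification step \<open>r = \<rho> r'\<close> means applying \<open>\<rho>\<inverse>\<close>, which is
  carried by \<open>r' = (\<rho>\<inverse> \<psi>) q\<close>; conjugating it back to \<open>q\<close> shows \<open>\<rho>\<inverse> \<psi>\<close> is carried by \<open>q\<close>.\<close>
lemma whitehead_orbit_step_back:
  assumes q: "well_labelled G q" "\<forall>H\<in>fst q. subgroup H G"
    and \<psi>: "\<psi> \<in> whitehead_products G (fst q) (snd q)"
    and r': "marked_tree G n Gf r'" and \<rho>: "\<rho> \<in> whitehead_products G (fst r') (snd r')"
    and eq: "act_marked \<psi> q = act_marked \<rho> r'"
  shows "\<exists>\<theta>\<in>whitehead_products G (fst q) (snd q). r' = act_marked \<theta> q"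
proof -
  interpret A: group "AutoGroup G" by (rule AutoGroup)
  have \<psi>_auto: "\<psi> \<in> auto G" and \<rho>_auto: "\<rho> \<in> auto G"
    using \<psi> \<rho> whitehead_products_auto by blast+
  have \<rho>': "inv\<^bsub>AutoGroup G\<^esub> \<rho> \<in> auto G" using inv_AutoGroup_auto[OF \<rho>_auto] .
  have r'_wl: "well_labelled G r'" using r' by (rule marked_tree_well_labelled)
  define \<theta> where "\<theta> = inv\<^bsub>AutoGroup G\<^esub> \<rho> \<otimes>\<^bsub>AutoGroup G\<^esub> \<psi>"
  have \<theta>_auto: "\<theta> \<in> auto G"
    using A.m_closed \<rho>' \<psi>_auto unfolding \<theta>_def carrier_AutoGroup by blast
  have "act_marked \<theta> q = act_marked (inv\<^bsub>AutoGroup G\<^esub> \<rho>) (act_marked \<rho> r')"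
    using act_marked_mult[OF q(1) \<rho>' \<psi>_auto] eq by (simp add: \<theta>_def)
  also have "\<dots> = act_marked (inv\<^bsub>AutoGroup G\<^esub> \<rho> \<otimes>\<^bsub>AutoGroup G\<^esub> \<rho>) r'"
    using act_marked_mult[OF r'_wl \<rho>' \<rho>_auto] ..
  also have "\<dots> = r'"
    using act_marked_one[OF r'_wl] \<rho>_auto by (simp add: carrier_AutoGroup[symmetric])
  finally have r'_eq: "r' = act_marked \<theta> q" ..
  have "inv\<^bsub>AutoGroup G\<^esub> \<rho> \<in> whitehead_products G (fst r') (snd r')"
    using subgroup.m_inv_closed[OF subgroup_whitehead_products[OF marked_tree_subgroups[OF r']] \<rho>] .
  then have "\<psi> \<otimes>\<^bsub>AutoGroup G\<^esub> (inv\<^bsub>AutoGroup G\<^esub> \<theta> \<otimes>\<^bsub>AutoGroup G\<^esub> inv\<^bsub>AutoGroup G\<^esub> \<rho> \<otimes>\<^bsub>AutoGroup G\<^esub> \<theta>)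
      \<in> whitehead_products G (fst q) (snd q)"
    using whitehead_products_act_marked[OF q(1) \<theta>_auto] \<psi>
      subgroup.m_closed[OF subgroup_whitehead_products[OF q(2)]] r'_eq by simp
  then have "\<theta> \<in> whitehead_products G (fst q) (snd q)"
    using \<psi>_auto \<rho>_auto
    by (simp add: \<theta>_def carrier_AutoGroup[symmetric] A.m_assoc A.inv_mult_group A.mult_inv_cancel_left)
  with r'_eq show ?thesis by blast
qed

lemma ident_imp_whitehead_orbit:
  assumes q: "marked_tree G n Gf q" and "(q, r) \<in> ident G n Gf"
  shows "\<exists>\<psi>\<in>whitehead_products G (fst q) (snd q). r = act_marked \<psi> q"
  using assms(2) unfolding ident_def
proof (induction rule: rtrancl_induct)
  case base
  show ?case
    using act_marked_one[OF marked_tree_well_labelled[OF q]] whitehead_products_one by metis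
next
  case (step r r')
  from step.IH obtain \<psi> where \<psi>: "\<psi> \<in> whitehead_products G (fst q) (snd q)"
    and r: "r = act_marked \<psi> q" by blast
  note q' = marked_tree_well_labelled[OF q] marked_tree_subgroups[OF q]
  from step.hyps(2) consider "(r, r') \<in> ident_step G n Gf" | "(r', r) \<in> ident_step G n Gf" by blast
  then show ?case
  proof cases
    case 1
    then obtain \<rho> where "r' = act_marked \<rho> r" "\<rho> \<in> whitehead_products G (fst r) (snd r)"
      unfolding ident_step_def by blast
    then show ?thesis using whitehead_orbit_step[OF q' \<psi>] r by metis
  next
    case 2
    then obtain \<rho> where "marked_tree G n Gf r'" "r = act_marked \<rho> r'"
      "\<rho> \<in> whitehead_products G (fst r') (snd r')"
      unfolding ident_step_def by blast
    then show ?thesis using whitehead_orbit_step_back[OF q' \<psi>] r by metis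
  qed
qed

end

section \<open>The separation order of a labelled tree\<close>

lemma sorted_wrt_list_exists:
  assumes "finite S" and irrefl: "\<And>x. \<not> R x x"
    and trans: "\<And>x y z. x \<in> S \<Longrightarrow> y \<in> S \<Longrightarrow> z \<in> S \<Longrightarrow> R x y \<Longrightarrow> R y z \<Longrightarrow> R x z"
    and total: "\<And>x y. x \<in> S \<Longrightarrow> y \<in> S \<Longrightarrow> x \<noteq> y \<Longrightarrow> R x y \<or> R y x"
  shows "\<exists>xs. set xs = S \<and> sorted_wrt R xs \<and> distinct xs"
  using assms(1) subset_refl[of S]
proof (induction rule: finite_subset_induct')
  case (insert a F)
  then obtain xs where xs: "set xs = F" "sorted_wrt R xs" "distinct xs" by blast
  have F_S: "y \<in> F \<Longrightarrow> y \<in> S" for y using insert.hyps(3) by blast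
  have around: "R y a \<or> R a y" if "y \<in> F" for y
    using total[OF F_S[OF that] insert.hyps(2)] that insert.hyps(4) by blast
  let ?ys = "filter (\<lambda>y. R y a) xs @ a # filter (R a) xs"
  have "set ?ys = insert a F" using around xs(1) by auto
  moreover have "sorted_wrt R ?ys"
    unfolding sorted_wrt_append using xs(1,2) trans[OF F_S insert.hyps(2) F_S]
    by (auto simp: sorted_wrt_filter)
  moreover have "distinct ?ys"
    using xs insert.hyps(4) irrefl trans[OF F_S insert.hyps(2) F_S] by (auto simp: distinct_append)
  ultimately show ?case by blast
qed simp

lemma list_all2_mem_set: "list_all2 (\<in>) ks Ls \<Longrightarrow> k \<in> set ks \<Longrightarrow> \<exists>L\<in>set Ls. k \<in> L"
  by (induction rule: list_all2_induct) auto

locale basis_tree = group +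
  fixes HH :: "'a set set" and V :: "nat set" and E :: "nat set set" and lab :: "nat \<Rightarrow> 'a lbl option"
  assumes tree: "pointed_labelled_tree (basis_labels HH) V E lab"
    and subgroups: "\<forall>H\<in>HH. subgroup H G"
    and finite_basis: "finite HH"
begin

definition vertex :: "'a lbl \<Rightarrow> nat" where
  "vertex l = (THE u. u \<in> V \<and> lab u = Some l)"

abbreviation root :: nat where "root \<equiv> vertex Star"
abbreviation node :: "'a set \<Rightarrow> nat" where "node H \<equiv> vertex (Fac H)"

lemma connected: "u \<in> V \<Longrightarrow> v \<in> V \<Longrightarrow> (u, v) \<in> (adj_rel V E)\<^sup>*"
proof -
  have "\<forall>u\<in>V. \<forall>v\<in>V. (u, v) \<in> (adj_rel V E)\<^sup>*"
    using tree unfolding pointed_labelled_tree_def is_tree_def by (elim conjE)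
  then show "u \<in> V \<Longrightarrow> v \<in> V \<Longrightarrow> (u, v) \<in> (adj_rel V E)\<^sup>*" by blast
qed

lemma vertex:
  assumes "l \<in> basis_labels HH"
  shows "vertex l \<in> V" and "lab (vertex l) = Some l"
proof -
  have "\<forall>l\<in>basis_labels HH. \<exists>!u. u \<in> V \<and> lab u = Some l"
    using tree unfolding pointed_labelled_tree_def by (elim conjE)
  then have "\<exists>!u. u \<in> V \<and> lab u = Some l" using assms by blast
  then show "vertex l \<in> V" "lab (vertex l) = Some l"
    unfolding vertex_def by (metis (mono_tags, lifting) theI')+
qed

lemma vertex_inj: "l \<in> basis_labels HH \<Longrightarrow> l' \<in> basis_labels HH \<Longrightarrow> l \<noteq> l' \<Longrightarrow> vertex l \<noteq> vertex l'"
  using vertex(2) by (metis option.inject)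

lemma Star_in_basis_labels: "Star \<in> basis_labels HH"
  by (simp add: basis_labels_def)

lemma Fac_in_basis_labels: "H \<in> HH \<Longrightarrow> Fac H \<in> basis_labels HH"
  by (simp add: basis_labels_def)

lemma root_in_V: "root \<in> V"
  using vertex(1)[OF Star_in_basis_labels] .

lemma node_in_V: "H \<in> HH \<Longrightarrow> node H \<in> V"
  using vertex(1)[OF Fac_in_basis_labels] .

lemma root_neq_node: "H \<in> HH \<Longrightarrow> root \<noteq> node H"
  using vertex_inj[OF Star_in_basis_labels Fac_in_basis_labels] by simp

lemma node_inj: "H \<in> HH \<Longrightarrow> K \<in> HH \<Longrightarrow> H \<noteq> K \<Longrightarrow> node H \<noteq> node K"
  using vertex_inj[OF Fac_in_basis_labels Fac_in_basis_labels] by simp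

text \<open>\<open>separates K L\<close>: the vertex of \<open>K\<close> lies on the path from \<open>\<star>\<close> to the vertex of \<open>L\<close>.\<close>
definition separates :: "'a set \<Rightarrow> 'a set \<Rightarrow> bool" where
  "separates K L \<longleftrightarrow> K \<noteq> L \<and> (root, node L) \<notin> (adj_rel (V - {node K}) E)\<^sup>*"

lemma separates_asym: "K \<in> HH \<Longrightarrow> L \<in> HH \<Longrightarrow> separates K L \<Longrightarrow> \<not> separates L K"
  using avoiding_paths_antisym[OF connected[OF root_in_V node_in_V] root_neq_node root_neq_node node_inj]
  unfolding separates_def by blast

lemma separates_trans:
  assumes "separates K1 K2" "separates K2 K3" "K1 \<in> HH" "K2 \<in> HH" "K3 \<in> HH"
  shows "separates K1 K3"
proof -
  have "(root, node K3) \<notin> (adj_rel (V - {node K1}) E)\<^sup>*"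
    using rtrancl_adj_rel_reach_blocker[of root "node K3" V "node K1" E "node K2"] assms(1,2)
    unfolding separates_def by blast
  moreover have "K1 \<noteq> K3" using separates_asym assms by blast
  ultimately show ?thesis unfolding separates_def by blast
qed

lemma not_separates_separator:
  assumes "H \<in> HH" "K \<in> HH" "L \<in> HH" "\<not> separates K H" "separates L H"
  shows "\<not> separates K L"
proof (cases "K = H")
  case True
  then show ?thesis using separates_asym assms by blast
next
  case False
  then have "(root, node H) \<in> (adj_rel (V - {node K}) E)\<^sup>*" using assms(4) unfolding separates_def by blast
  then show ?thesis
    using rtrancl_adj_rel_reach_blocker[of root "node H" V "node K" E "node L"] assms(5)
    unfolding separates_def by blast
qed

lemma separates_total:
  assumes "H \<in> HH" "K \<in> HH" "L \<in> HH" "separates K H" "separates L H" "K \<noteq> L"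
  shows "separates K L \<or> separates L K"
proof (rule ccontr)
  assume "\<not> (separates K L \<or> separates L K)"
  with assms(6) have "(root, node L) \<in> (adj_rel (V - {node K}) E)\<^sup>*"
    "(root, node K) \<in> (adj_rel (V - {node L}) E)\<^sup>*"
    unfolding separates_def by auto
  moreover have "H \<noteq> K" "H \<noteq> L" using assms(4,5) unfolding separates_def by auto
  ultimately have "(root, node H) \<in> (adj_rel (V - {node K}) E)\<^sup>* \<or>
      (root, node H) \<in> (adj_rel (V - {node L}) E)\<^sup>*"
    using avoiding_paths_total[OF connected[OF node_in_V node_in_V] node_inj node_inj node_inj]
      assms(1-3,6) by blast
  then show False using assms(4,5) unfolding separates_def by blast
qed

lemma separates_later:
  assumes "H \<in> HH" "K \<in> HH" "L \<in> HH" "separates K H" "separates L H" "separates K L"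
  shows "(node L, node H) \<in> (adj_rel (V - {node K}) E)\<^sup>*"
proof -
  have "H \<noteq> K" "H \<noteq> L" "K \<noteq> L" using assms(4-6) unfolding separates_def by auto
  then show ?thesis
    using avoiding_paths_later_separator[OF connected[OF root_in_V node_in_V[OF assms(2)]]
        connected[OF node_in_V[OF assms(1)] node_in_V[OF assms(2)]] root_neq_node[OF assms(2)]
        node_inj[OF assms(1,2)] root_neq_node[OF assms(3)] node_inj[OF assms(2,3)] node_inj[OF assms(1,3)]]
      assms(5,6) unfolding separates_def by blast
qed

definition separators :: "'a set \<Rightarrow> 'a set set" where
  "separators H = {K \<in> HH. separates K H}"

definition separator_list :: "'a set \<Rightarrow> 'a set list" where
  "separator_list H = (SOME xs. set xs = separators H \<and> sorted_wrt separates xs \<and> distinct xs)"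

lemma separator_list:
  assumes "H \<in> HH"
  shows "set (separator_list H) = separators H" "sorted_wrt separates (separator_list H)"
    "distinct (separator_list H)"
proof -
  have "\<exists>xs. set xs = separators H \<and> sorted_wrt separates xs \<and> distinct xs"
  proof (rule sorted_wrt_list_exists)
    show "finite (separators H)" using finite_basis by (simp add: separators_def)
    show "\<not> separates K K" for K by (simp add: separates_def)
    show "separates K1 K3"
      if "K1 \<in> separators H" "K2 \<in> separators H" "K3 \<in> separators H" "separates K1 K2" "separates K2 K3"
      for K1 K2 K3
      using separates_trans[OF that(4,5)] that(1-3) by (simp add: separators_def)
    show "separates K L \<or> separates L K"
      if "K \<in> separators H" "L \<in> separators H" "K \<noteq> L" for K L
      using separates_total[OF assms _ _ _ _ that(3)] that(1,2) by (simp add: separators_def)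
  qed
  then show "set (separator_list H) = separators H" "sorted_wrt separates (separator_list H)"
    "distinct (separator_list H)"
    unfolding separator_list_def by (metis (mono_tags, lifting) someI_ex)+
qed

lemma factor_carrier: "H \<in> HH \<Longrightarrow> H \<subseteq> carrier G"
  using subgroup.subset[OF bspec[OF subgroups]] .

lemma separator_list_mem: "H \<in> HH \<Longrightarrow> L \<in> set (separator_list H) \<Longrightarrow> L \<in> HH \<and> separates L H"
  using separator_list(1) by (simp add: separators_def)

lemma word_in_carrier:
  assumes "list_all2 (\<in>) ks Ls" "set Ls \<subseteq> HH"
  shows "set ks \<subseteq> carrier G"
proof
  fix k assume "k \<in> set ks"
  then obtain L where "L \<in> set Ls" "k \<in> L" using list_all2_mem_set[OF assms(1)] by blast
  then show "k \<in> carrier G" using assms(2) subsetD[OF factor_carrier] by blast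
qed

lemma petal_of_node:
  "K \<in> HH \<Longrightarrow> v \<in> V \<Longrightarrow> v \<noteq> node K \<Longrightarrow>
   labels_of lab (component_minus V E (node K) v) \<in> petal_family V E lab (Fac K)"
  using vertex[OF Fac_in_basis_labels] unfolding petal_family_def by blast

lemma label_in_petal:
  "(v, w) \<in> (adj_rel (V - {u}) E)\<^sup>* \<Longrightarrow> lab w = Some l \<Longrightarrow> l \<in> labels_of lab (component_minus V E u v)"
  unfolding labels_of_def component_minus_def by blast

end

section \<open>Products of Whitehead automorphisms carried by a tree\<close>

text \<open>The conditions on a Whitehead automorphism carried by the tree, with the petals at \<open>K\<close>
  expressed through paths avoiding the vertex of \<open>K\<close>.\<close>
locale whitehead_step = basis_tree +
  fixes \<phi> :: "'a \<Rightarrow> 'a" and K :: "'a set" and x :: "'a set \<Rightarrow> 'a"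
  assumes K: "K \<in> HH" and x_K: "x K = \<one>" and x_in: "\<And>H. H \<in> HH \<Longrightarrow> x H \<in> K"
    and x_same_petal: "\<And>H1 H2. H1 \<in> HH \<Longrightarrow> H2 \<in> HH \<Longrightarrow> H1 \<noteq> K \<Longrightarrow>
      (node H1, node H2) \<in> (adj_rel (V - {node K}) E)\<^sup>* \<Longrightarrow> x H1 = x H2"
    and x_root_petal: "\<And>H. H \<in> HH \<Longrightarrow> \<not> separates K H \<Longrightarrow> x H = \<one>"
    and auto: "\<phi> \<in> auto G"
    and conj: "\<And>H h. H \<in> HH \<Longrightarrow> h \<in> H \<Longrightarrow> \<phi> h = x H \<otimes> h \<otimes> inv (x H)"

context basis_tree
begin

lemma whitehead_carried_step:
  assumes "whitehead_carried G HH (petal_family V E lab) \<phi>"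
  shows "\<exists>K x. whitehead_step G HH V E lab \<phi> K x"
proof -
  obtain K x where K: "K \<in> HH" and x_K: "x K = \<one>" and x_in: "\<And>H. H \<in> HH \<Longrightarrow> x H \<in> K"
    and petal: "\<And>P H1 H2. P \<in> petal_family V E lab (Fac K) \<Longrightarrow> Fac H1 \<in> P \<Longrightarrow> Fac H2 \<in> P \<Longrightarrow> x H1 = x H2"
    and star: "\<And>P H. P \<in> petal_family V E lab (Fac K) \<Longrightarrow> Star \<in> P \<Longrightarrow> Fac H \<in> P \<Longrightarrow> x H = \<one>"
    and \<phi>: "\<phi> \<in> auto G" and conj: "\<And>H h. H \<in> HH \<Longrightarrow> h \<in> H \<Longrightarrow> \<phi> h = x H \<otimes> h \<otimes> inv (x H)"
    by (erule whitehead_carriedE[OF assms])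
  have "x H1 = x H2" if H: "H1 \<in> HH" "H2 \<in> HH" "H1 \<noteq> K"
    and path: "(node H1, node H2) \<in> (adj_rel (V - {node K}) E)\<^sup>*" for H1 H2
    using petal[OF petal_of_node[OF K node_in_V[OF H(1)] node_inj[OF H(1) K H(3)]]]
      label_in_petal[OF rtrancl_refl vertex(2)[OF Fac_in_basis_labels[OF H(1)]]]
      label_in_petal[OF path vertex(2)[OF Fac_in_basis_labels[OF H(2)]]] .
  moreover have "x H = \<one>" if H: "H \<in> HH" "\<not> separates K H" for H
  proof (cases "K = H")
    case False
    then have path: "(root, node H) \<in> (adj_rel (V - {node K}) E)\<^sup>*"
      using H(2) unfolding separates_def by blast
    show ?thesis
      using star[OF petal_of_node[OF K root_in_V root_neq_node[OF K]]]
        label_in_petal[OF rtrancl_refl vertex(2)[OF Star_in_basis_labels]]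
        label_in_petal[OF path vertex(2)[OF Fac_in_basis_labels[OF H(1)]]] .
  qed (use x_K in simp)
  ultimately have "whitehead_step G HH V E lab \<phi> K x"
    using K x_K x_in \<phi> conj by unfold_locales blast+
  then show ?thesis by blast
qed

end

context whitehead_step
begin

lemma fixes_factor: "L \<in> HH \<Longrightarrow> x L = \<one> \<Longrightarrow> y \<in> L \<Longrightarrow> \<phi> y = y"
  by (simp add: conj subsetD[OF factor_carrier])

lemma step_not_separating:
  assumes H: "H \<in> HH" and "\<not> separates K H" and ks: "list_all2 (\<in>) ks (separator_list H)"
    and h: "h \<in> H"
  shows "\<phi> (list_prod G ks \<otimes> h \<otimes> inv (list_prod G ks)) = list_prod G ks \<otimes> h \<otimes> inv (list_prod G ks)"
proof -
  have seps: "set (separator_list H) \<subseteq> HH" using separator_list_mem[OF H] by blast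
  have "\<phi> k = k" if k: "k \<in> set ks" for k
  proof -
    obtain L where L: "L \<in> set (separator_list H)" "k \<in> L"
      using list_all2_mem_set[OF ks k] by blast
    then have "L \<in> HH" "\<not> separates K L"
      using separator_list_mem[OF H] not_separates_separator[OF H K] assms(2) by blast+
    then show ?thesis using fixes_factor x_root_petal L(2) by blast
  qed
  then have "map \<phi> ks = ks" by (rule map_idI)
  moreover have "\<phi> h = h" using fixes_factor[OF H x_root_petal[OF H assms(2)] h] .
  moreover have "set ks \<subseteq> carrier G" using word_in_carrier[OF ks seps] .
  ultimately show ?thesis
    using h factor_carrier[OF H] by (simp add: auto_conj[OF auto] auto_list_prod[OF auto] list_prod_closed subset_iff)
qed

lemma fixes_earlier_separators:
  assumes H: "H \<in> HH" and L: "separator_list H = Lp @ K # Ls" and "L \<in> set Lp" "y \<in> L"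
  shows "\<phi> y = y"
proof -
  have "sorted_wrt separates (Lp @ K # Ls)" using separator_list(2)[OF H] L by simp
  then have "L \<in> HH" "separates L K"
    using assms(3) separator_list_mem[OF H] L by (auto simp: sorted_wrt_append)
  then show ?thesis using fixes_factor x_root_petal separates_asym[OF _ K] assms(4) by blast
qed

lemma conj_later_separators:
  assumes H: "H \<in> HH" and sep: "separates K H" and L: "separator_list H = Lp @ K # Ls"
    and "L \<in> set Ls" "y \<in> L"
  shows "\<phi> y = x H \<otimes> y \<otimes> inv (x H)"
proof -
  have "sorted_wrt separates (Lp @ K # Ls)" using separator_list(2)[OF H] L by simp
  then have "L \<in> HH" "separates K L" "separates L H"
    using assms(4) separator_list_mem[OF H] L by (auto simp: sorted_wrt_append)
  then have "x L = x H"
    using x_same_petal[OF _ H _ separates_later[OF H K _ sep]] unfolding separates_def by blast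
  then show ?thesis using conj \<open>L \<in> HH\<close> assms(5) by simp
qed

text \<open>By the two lemmas above, \<open>\<phi>\<close> conjugates \<open>H\<close> and the separators after \<open>K\<close> by one
  element \<open>x H \<in> K\<close> and fixes everything else in the word, so \<open>x H\<close> is absorbed into the letter
  of the word belonging to \<open>K\<close>.\<close>
lemma step_separating:
  assumes H: "H \<in> HH" and sep: "separates K H" and ks: "list_all2 (\<in>) ks (separator_list H)"
  obtains ks' where "list_all2 (\<in>) ks' (separator_list H)"
    "\<And>h. h \<in> H \<Longrightarrow> \<phi> (list_prod G ks \<otimes> h \<otimes> inv (list_prod G ks)) = list_prod G ks' \<otimes> h \<otimes> inv (list_prod G ks')"
proof -
  have seps: "set (separator_list H) \<subseteq> HH" using separator_list_mem[OF H] by blast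
  have "K \<in> set (separator_list H)" using separator_list(1)[OF H] K sep by (simp add: separators_def)
  then obtain Lp Ls where L: "separator_list H = Lp @ K # Ls" by (meson split_list)
  then obtain ps k ss where ks_eq: "ks = ps @ k # ss" and ps: "list_all2 (\<in>) ps Lp"
    and k: "k \<in> K" and ss: "list_all2 (\<in>) ss Ls"
    using ks by (auto simp: list_all2_append2 list_all2_Cons2)
  define a where "a = x H"
  have a: "a \<in> K" "a \<in> carrier G" using x_in[OF H] factor_carrier[OF K] by (auto simp: a_def)
  have ps_fixed: "\<phi> p = p" if "p \<in> set ps" for p
    using list_all2_mem_set[OF ps that] fixes_earlier_separators[OF H L] by blast
  have ss_conj: "\<phi> s = a \<otimes> s \<otimes> inv a" if "s \<in> set ss" for s
    using list_all2_mem_set[OF ss that] conj_later_separators[OF H sep L] unfolding a_def by blast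
  have c: "set ps \<subseteq> carrier G" "k \<in> carrier G" "set ss \<subseteq> carrier G"
    using word_in_carrier[OF ks seps] ks_eq by auto
  let ?ks' = "ps @ (k \<otimes> a) # ss"
  have "list_all2 (\<in>) ?ks' (separator_list H)"
    using ps ss k a subgroup.m_closed[OF bspec[OF subgroups K]] L by (simp add: list_all2_appendI)
  moreover have "\<phi> (list_prod G ks \<otimes> h \<otimes> inv (list_prod G ks)) = list_prod G ?ks' \<otimes> h \<otimes> inv (list_prod G ?ks')"
    if "h \<in> H" for h
  proof (rule auto_conj_shift[OF auto _ _ _ a(2)])
    show "\<phi> (list_prod G ks) = list_prod G ?ks' \<otimes> inv a"
      using auto_list_prod_shift[OF auto c a(2) ps_fixed _ ss_conj] fixes_factor[OF K x_K k] ks_eq by simp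
    show "\<phi> h = a \<otimes> h \<otimes> inv a" using conj[OF H that] by (simp add: a_def)
  qed (use c a that factor_carrier[OF H] ks_eq in \<open>auto intro!: list_prod_closed\<close>)
  ultimately show ?thesis by (rule that)
qed

end

context basis_tree
begin

definition conj_by_separators :: "('a \<Rightarrow> 'a) \<Rightarrow> bool" where
  "conj_by_separators \<psi> \<longleftrightarrow> (\<forall>H\<in>HH. \<exists>ks. list_all2 (\<in>) ks (separator_list H) \<and>
     (\<forall>h\<in>H. \<psi> h = list_prod G ks \<otimes> h \<otimes> inv (list_prod G ks)))"

lemma conj_by_separators_id: "conj_by_separators (\<lambda>x\<in>carrier G. x)"
  unfolding conj_by_separators_def
proof
  fix H assume H: "H \<in> HH"
  let ?ks = "map (\<lambda>_. \<one>) (separator_list H)"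
  have "\<one> \<in> L" if "L \<in> set (separator_list H)" for L
    using subgroup.one_closed[OF bspec[OF subgroups]] separator_list_mem[OF H that] by blast
  then have "list_all2 (\<in>) ?ks (separator_list H)"
    by (simp add: list_all2_map1 list_all2_same)
  moreover have "list_prod G ?ks = \<one>" by (rule list_prod_map_one)
  ultimately show "\<exists>ks. list_all2 (\<in>) ks (separator_list H) \<and>
      (\<forall>h\<in>H. (\<lambda>x\<in>carrier G. x) h = list_prod G ks \<otimes> h \<otimes> inv (list_prod G ks))"
    using factor_carrier[OF H] by auto
qed

lemma conj_by_separators_step:
  assumes "whitehead_carried G HH (petal_family V E lab) \<phi>" "\<rho> \<in> auto G" "conj_by_separators \<rho>"
  shows "conj_by_separators (compose (carrier G) \<phi> \<rho>)"
  unfolding conj_by_separators_def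
proof
  obtain K x where step: "whitehead_step G HH V E lab \<phi> K x"
    using whitehead_carried_step[OF assms(1)] by blast
  interpret whitehead_step G HH V E lab \<phi> K x by (rule step)
  fix H assume H: "H \<in> HH"
  then obtain ks where ks: "list_all2 (\<in>) ks (separator_list H)"
    and \<rho>: "\<And>h. h \<in> H \<Longrightarrow> \<rho> h = list_prod G ks \<otimes> h \<otimes> inv (list_prod G ks)"
    using assms(3) unfolding conj_by_separators_def by blast
  have compose: "compose (carrier G) \<phi> \<rho> h = \<phi> (list_prod G ks \<otimes> h \<otimes> inv (list_prod G ks))" if "h \<in> H" for h
    using \<rho>[OF that] subsetD[OF factor_carrier[OF H] that] by (simp add: compose_def)
  show "\<exists>ks. list_all2 (\<in>) ks (separator_list H) \<and>
      (\<forall>h\<in>H. compose (carrier G) \<phi> \<rho> h = list_prod G ks \<otimes> h \<otimes> inv (list_prod G ks))"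
  proof (cases "separates K H")
    case True
    then show ?thesis using step_separating[OF H True ks] compose by metis
  next
    case False
    then show ?thesis using step_not_separating[OF H False ks] compose ks by metis
  qed
qed

lemma whitehead_products_conj_by_separators:
  "\<psi> \<in> whitehead_products G HH (petal_family V E lab) \<Longrightarrow> conj_by_separators \<psi>"
proof (induction rule: whitehead_products.induct)
  case wp_id
  show ?case by (rule conj_by_separators_id)
next
  case (wp_step \<phi> \<rho>)
  then show ?case using conj_by_separators_step whitehead_products_auto by blast
qed

definition bounded_conjugates :: "'a set" where
  "bounded_conjugates = {list_prod G ks \<otimes> h \<otimes> inv (list_prod G ks) | ks h.
     (set ks \<subseteq> \<Union>HH \<and> length ks \<le> card HH) \<and> h \<in> \<Union>HH}"

lemma finite_bounded_conjugates: "\<forall>H\<in>HH. finite H \<Longrightarrow> finite bounded_conjugates"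
  unfolding bounded_conjugates_def using finite_basis
  by (intro finite_image_set2 finite_lists_length_le) auto

lemma conj_by_separators_bounded:
  assumes "conj_by_separators \<psi>" "H \<in> HH" "h \<in> H"
  shows "\<psi> h \<in> bounded_conjugates"
proof -
  obtain ks where ks: "list_all2 (\<in>) ks (separator_list H)"
    and \<psi>: "\<psi> h = list_prod G ks \<otimes> h \<otimes> inv (list_prod G ks)"
    using assms unfolding conj_by_separators_def by blast
  have "length ks = card (separators H)"
    using list_all2_lengthD[OF ks] distinct_card[OF separator_list(3)] separator_list(1) assms(2) by simp
  also have "\<dots> \<le> card HH" using finite_basis by (intro card_mono) (auto simp: separators_def)
  finally have "length ks \<le> card HH" .
  moreover have "set ks \<subseteq> \<Union>HH"
    using list_all2_mem_set[OF ks] separator_list_mem[OF assms(2)] by blast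
  ultimately show ?thesis unfolding bounded_conjugates_def using \<psi> assms(2,3) by blast
qed

end

lemma mclass_refl: "p \<in> mclass G n Gf p"
  by (simp add: mclass_def ident_def)

definition whitehead_images :: "('a, 'b) monoid_scheme \<Rightarrow> 'a marked \<Rightarrow> 'a set" where
  "whitehead_images G q = (\<Union>\<psi>\<in>whitehead_products G (fst q) (snd q). \<psi> ` \<Union>(fst q))"

context group
begin

lemma finite_whitehead_images:
  assumes q: "marked_tree G n Gf q" and fin: "\<forall>i<n. finite (Gf i)"
  shows "finite (whitehead_images G q)"
proof -
  obtain V E lab where T: "pointed_labelled_tree (basis_labels (fst q)) V E lab"
    and A: "snd q = petal_family V E lab"
    using q by (rule marked_treeE)
  have basis: "is_basis G n Gf (fst q)" using q by (simp add: marked_tree_def)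
  interpret basis_tree G "fst q" V E lab
    using T marked_tree_subgroups[OF q] is_basis_finite(1)[OF basis fin]
    by unfold_locales auto
  have "whitehead_images G q \<subseteq> bounded_conjugates"
    unfolding whitehead_images_def A
    using conj_by_separators_bounded[OF whitehead_products_conj_by_separators] by blast
  then show ?thesis
    using finite_bounded_conjugates is_basis_finite(2)[OF basis fin] finite_subset by blast
qed

lemma ident_act_marked_image:
  assumes "marked_tree G n Gf q" "(q, act_marked \<phi> p) \<in> ident G n Gf"
  shows "\<phi> ` \<Union>(fst p) \<subseteq> whitehead_images G q"
proof
  fix y assume "y \<in> \<phi> ` \<Union>(fst p)"
  then obtain H u where H: "H \<in> fst p" "u \<in> H" "y = \<phi> u" by blast
  obtain \<psi> where \<psi>: "\<psi> \<in> whitehead_products G (fst q) (snd q)" "act_marked \<phi> p = act_marked \<psi> q"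
    using ident_imp_whitehead_orbit[OF assms] by blast
  then have "(`) \<phi> ` fst p = (`) \<psi> ` fst q" by (simp add: act_marked_def)
  then have "\<phi> ` H \<in> (`) \<psi> ` fst q" using H(1) by blast
  then obtain H' where "H' \<in> fst q" "\<phi> ` H = \<psi> ` H'" by blast
  then show "y \<in> whitehead_images G q" using \<psi>(1) H(2,3) unfolding whitehead_images_def by blast
qed

lemma simplex_stabilizer_subset:
  assumes rep: "\<forall>d\<in>\<sigma>. marked_tree G n Gf (rep d) \<and> d = mclass G n Gf (rep d)" and c: "c \<in> \<sigma>"
  shows "simplex_stabilizer G n Gf \<sigma> \<subseteq>
    {\<phi> \<in> auto G. \<phi> ` \<Union>(fst (rep c)) \<subseteq> (\<Union>d\<in>\<sigma>. whitehead_images G (rep d))}"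
proof
  fix \<phi> assume \<phi>: "\<phi> \<in> simplex_stabilizer G n Gf \<sigma>"
  let ?d = "act_class G n Gf \<phi> c"
  have d: "?d \<in> \<sigma>" using \<phi> c unfolding simplex_stabilizer_def by blast
  have "rep c \<in> c" using conjunct2[OF rep[rule_format, OF c]] mclass_refl by metis
  then have "act_marked \<phi> (rep c) \<in> ?d" unfolding act_class_def ident_def by blast
  also have "?d = mclass G n Gf (rep ?d)" using conjunct2[OF rep[rule_format, OF d]] .
  finally have "(rep ?d, act_marked \<phi> (rep c)) \<in> ident G n Gf" by (simp add: mclass_def)
  then have "\<phi> ` \<Union>(fst (rep c)) \<subseteq> whitehead_images G (rep ?d)"
    by (rule ident_act_marked_image[OF conjunct1[OF rep[rule_format, OF d]]])
  moreover have "\<phi> \<in> auto G" using \<phi> by (simp add: simplex_stabilizer_def Aut_eq_auto)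
  ultimately show "\<phi> \<in> {\<phi> \<in> auto G. \<phi> ` \<Union>(fst (rep c)) \<subseteq> (\<Union>d\<in>\<sigma>. whitehead_images G (rep d))}"
    using d by blast
qed

lemma auto_eq_on_free_factors:
  assumes "is_free_product G Hf I" "f1 \<in> auto G" "f2 \<in> auto G"
    and agree: "\<And>i h. i \<in> I \<Longrightarrow> h \<in> Hf i \<Longrightarrow> f1 h = f2 h"
  shows "f1 = f2"
proof (rule extensionalityI[OF auto_extensional[OF assms(2)] auto_extensional[OF assms(3)]])
  fix g assume "g \<in> carrier G"
  then obtain w where w: "reduced_word G Hf I w" "word_prod G w = g"
    using assms(1) unfolding is_free_product_def by blast
  have letters: "i \<in> I \<and> y \<in> Hf i" if "(i, y) \<in> set w" for i y
    using w(1) that unfolding reduced_word_def by blast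
  have sub: "set (map snd w) \<subseteq> carrier G"
    using letters assms(1) subgroup.subset unfolding is_free_product_def by fastforce
  have "map f1 (map snd w) = map f2 (map snd w)"
    using letters agree by (fastforce intro!: map_cong)
  then show "f1 g = f2 g"
    using w(2) auto_list_prod[OF assms(2) sub] auto_list_prod[OF assms(3) sub]
    by (simp only: word_prod_eq_list_prod)
qed

lemma finite_auto_bounded_on:
  assumes "finite U" "finite T"
    and determined: "\<And>f1 f2. f1 \<in> auto G \<Longrightarrow> f2 \<in> auto G \<Longrightarrow> (\<forall>u\<in>U. f1 u = f2 u) \<Longrightarrow> f1 = f2"
  shows "finite {\<phi> \<in> auto G. \<phi> ` U \<subseteq> T}"
proof (rule finite_imageD)
  show "inj_on (\<lambda>\<phi>. restrict \<phi> U) {\<phi> \<in> auto G. \<phi> ` U \<subseteq> T}"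
    using determined by (intro inj_onI) (metis (no_types, lifting) mem_Collect_eq restrict_apply')
  have "(\<lambda>\<phi>. restrict \<phi> U) ` {\<phi> \<in> auto G. \<phi> ` U \<subseteq> T} \<subseteq> PiE U (\<lambda>_. T)" by auto
  then show "finite ((\<lambda>\<phi>. restrict \<phi> U) ` {\<phi> \<in> auto G. \<phi> ` U \<subseteq> T})"
    using finite_PiE[OF assms(1), of "\<lambda>_. T"] assms(2) finite_subset by blast
qed

lemma finite_auto_bounded_on_basis:
  assumes p: "marked_tree G n Gf p" and fin: "\<forall>i<n. finite (Gf i)" and "finite T"
  shows "finite {\<phi> \<in> auto G. \<phi> ` \<Union>(fst p) \<subseteq> T}"
proof -
  have basis: "is_basis G n Gf (fst p)" using p by (simp add: marked_tree_def)
  then obtain Hf where Hf: "fst p = Hf ` {..<n}" "\<forall>i<n. \<exists>g\<in>carrier G. Hf i = conj_set G g (Gf i)"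
    "is_free_product G Hf {..<n}"
    by (rule is_basisE)
  show ?thesis
  proof (rule finite_auto_bounded_on[OF _ \<open>finite T\<close>])
    show "finite (\<Union>(fst p))" using is_basis_finite[OF basis fin] by (intro finite_Union) auto
    show "f1 = f2" if "f1 \<in> auto G" "f2 \<in> auto G" "\<forall>u\<in>\<Union>(fst p). f1 u = f2 u" for f1 f2
      using auto_eq_on_free_factors[OF Hf(3) that(1,2)] that(3) unfolding Hf(1) by blast
  qed
qed

end

lemma L_simplex_representatives:
  assumes "L_simplex G n Gf \<sigma>"
  obtains rep where "\<forall>d\<in>\<sigma>. marked_tree G n Gf (rep d) \<and> d = mclass G n Gf (rep d)"
proof -
  have "\<forall>d\<in>\<sigma>. \<exists>q. marked_tree G n Gf q \<and> d = mclass G n Gf q"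
    using assms unfolding L_simplex_def L_vertices_def by blast
  from bchoice[OF this] obtain rep where "\<forall>d\<in>\<sigma>. marked_tree G n Gf (rep d) \<and> d = mclass G n Gf (rep d)" ..
  then show thesis by (rule that)
qed

theorem proposition4p1:
  fixes G :: "('a, 'b) monoid_scheme" and n :: nat and Gf :: "nat \<Rightarrow> 'a set"
    and \<sigma> :: "'a marked set set"
  assumes "is_free_product G Gf {..<n}"
    and "\<forall>i<n. finite (Gf i) \<and> Gf i \<noteq> {\<one>\<^bsub>G\<^esub>}"
    and "L_simplex G n Gf \<sigma>"
  shows "finite (simplex_stabilizer G n Gf \<sigma>)"
proof -
  interpret group G using assms(1) by (simp add: is_free_product_def)
  have fin: "\<forall>i<n. finite (Gf i)" using assms(2) by blast
  obtain rep where rep: "\<forall>d\<in>\<sigma>. marked_tree G n Gf (rep d) \<and> d = mclass G n Gf (rep d)"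
    using assms(3) by (rule L_simplex_representatives)
  obtain c where c: "c \<in> \<sigma>" using assms(3) unfolding L_simplex_def by blast
  have "finite \<sigma>" using assms(3) unfolding L_simplex_def by blast
  then have "finite (\<Union>d\<in>\<sigma>. whitehead_images G (rep d))"
    using finite_whitehead_images[OF conjunct1[OF rep[rule_format]] fin] by (intro finite_UN_I)
  then have "finite {\<phi> \<in> auto G. \<phi> ` \<Union>(fst (rep c)) \<subseteq> (\<Union>d\<in>\<sigma>. whitehead_images G (rep d))}"
    by (rule finite_auto_bounded_on_basis[OF conjunct1[OF rep[rule_format, OF c]] fin])
  then show ?thesis using simplex_stabilizer_subset[OF rep c] by (rule finite_subset[rotated])
qed

end
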